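(* Let $H=\Bbbk^G{}^\tau\#_\sigma\Bbbk F$ be as in the context and fix $f\in F$. (1) The map $\Bbbk^{G_f}_{\tau_f}\to H'_f$, $p_g\mapsto p_g\#f$ ($g\in G_f$), is a coalgebra isomorphism onto the subcoalgebra $\mathrm{span}\{p_g\#f\mid g\in G_f\}$ of $H'_f$. (2) If $(V,\rho)$ is a right $\Bbbk^{G_f}_{\tau_f}$-comodule with $\rho(v)=\sum_{g\in G_f}v_g\otimes p_g$, then $V\otimes\Bbbk f$ is a right $H'_f$-comodule via $\rho'(v\otimes f)=\sum_{g\in G_f}v_g\otimes f\otimes p_g\#f$. (3) The cotensor product $\tilde V=(V\otimes\Bbbk f)\Box_{H'_f}H$ is a right $H$-comodule with coaction $\mathrm{id}\otimes\Delta$, and $\tilde V=\bigoplus_{z\in T_f}V\otimes\Bbbk f\otimes z$ as vector spaces, where for $v\in V$, $z\in T_f$ the symbol $v\otimes f\otimes z$ denotes the element $\sum_{g\in G_f}\tau(gz,z^{-1};f)\,v_g\otimes f\otimes p_{gz}\#(z^{-1}\triangleright f)\in\tilde V$ (the map $v\mapsto v\otimes f\otimes z$ being injective and linear). Writing each $x\in G$ uniquely as $x=g_xz_x$ with $g_x\in G_f$, $z_x\in T_f$, the coaction is $$\tilde\rho(v\otimes f\otimes z)=\sum_{x\in G}\tau(z_x^{-1},g_x^{-1};f)^{-1}\tau(z_x^{-1}g_x^{-1}z,z^{-1};f)\;v_{g_x^{-1}}\otimes f\otimes z_x\otimes p_{x^{-1}z}\#(z^{-1}\triangleright f)$$ for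 all $v\in V$, $z\in T_f$.
   Context: Standing setup: $\Bbbk$ is an algebraically closed field of characteristic $0$, $F$ a group (possibly infinite), $G$ a finite group, and $(F,G,\triangleleft,\triangleright)$ a matched pair: $\triangleright:G\times F\to F$ a left action of $G$ on the set $F$, $\triangleleft:G\times F\to G$ a right action of $F$ on the set $G$, with $g\triangleright(ff')=(g\triangleright f)((g\triangleleft f)\triangleright f')$ and $(gg')\triangleleft f=(g\triangleleft(g'\triangleright f))(g'\triangleleft f)$. Maps $\sigma:G\times F\times F\to\Bbbk^\times$, $(g,f,f')\mapsto\sigma(g;f,f')$, and $\tau:G\times G\times F\to\Bbbk^\times$, $(g,g',f)\mapsto\tau(g,g';f)$, satisfy: $\sigma(g;1_F,f)=\sigma(g;f,1_F)=\sigma(1_G;f,f')=1$; $\sigma(g\triangleleft f;f',f'')\sigma(g;f,f'f'')=\sigma(g;f,f')\sigma(g;ff',f'')$; $\tau(1_G,g;f)=\tau(g,1_G;f)=\tau(g,g';1_F)=1$; $\tau(g,g';g''\triangleright f)\tau(gg',g'';f)=\tau(g,g'g'';f)\tau(g',g'';f)$; and $\sigma(gg';f,f')\tau(g,g';ff')=\sigma(g;g'\triangleright f,(g'\triangleleft f)\triangleright f')\sigma(g';f,f')\tau(g,g';f)\tau(g\triangleleft(g'\triangleright f),g'\triangleleft f;f')$. $H$ has basis $\{p_g\#f\}$, product $(p_g\#f)(p_{g'}\#f')=\delta_{g\triangleleft f,g'}\sigma(g;f,f')p_g\#ff'$, coproduct $\Delta(p_g\#f)=\sum_{x\in G}\tau(gx^{-1},x;f)\,p_{gx^{-1}}\#(x\triangleright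 f)\otimes p_x\#f$, counit $\varepsilon(p_g\#f)=\delta_{g,1_G}$. Notation: $G_f=\{g\in G\mid g\triangleright f=f\}$; $T_f$ is a complete set of right coset representatives of $G_f$ in $G$ (so $G=\bigsqcup_{z\in T_f}G_fz$) with $1_G\in T_f$. $\Bbbk^{G_f}_{\tau_f}$ is the coalgebra with basis $\{p_g\}_{g\in G_f}$, $\Delta(p_g)=\sum_{x\in G_f}\tau(gx^{-1},x;f)p_{gx^{-1}}\otimes p_x$, $\varepsilon(p_g)=\delta_{g,1_G}$. $H'_f=\Bbbk^{G_f}{}^\tau\#\Bbbk F$ is the coalgebra with basis $\{p_g\#f'\mid g\in G_f,f'\in F\}$, $\Delta(p_g\#f')=\sum_{x\in G_f}\tau(gx^{-1},x;f')p_{gx^{-1}}\#(x\triangleright f')\otimes p_x\#f'$, $\varepsilon(p_g\#f')=\delta_{g,1_G}$; the projection $\pi_f:H\to H'_f$ keeping the terms with $g\in G_f$ is a coalgebra epimorphism, making $H$ a left $H'_f$-comodule via $(\pi_f\otimes\mathrm{id})\Delta$. For a right $C$-comodule $(M,\rho_M)$ and left $C$-comodule $(N,\rho_N)$, $M\Box_CN=\ker(\rho_M\otimes\mathrm{id}-\mathrm{id}\otimes\rho_N)\subseteq M\otimes N$. *)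

theory Defs
  imports "HOL-Algebra.Coset" "HOL-Library.Function_Algebras"
          "HOL-Computational_Algebra.Polynomial"
begin

definition alg_closed :: "'k::field itself \<Rightarrow> bool" where
  "alg_closed _ \<longleftrightarrow> (\<forall>p :: 'k poly. degree p \<noteq> 0 \<longrightarrow> (\<exists>x. poly p x = 0))"

(* lt g f = g |> f  (left action of G on F),  rt g f = g <| f  (right action of F on G) *)
definition matched_pair ::
  "('g,'a) monoid_scheme \<Rightarrow> ('f,'b) monoid_scheme \<Rightarrow> ('g \<Rightarrow> 'f \<Rightarrow> 'f) \<Rightarrow> ('g \<Rightarrow> 'f \<Rightarrow> 'g) \<Rightarrow> bool" where
  "matched_pair G F lt rt \<longleftrightarrow> group G \<and> group F \<and> finite (carrier G) \<and>
     (\<forall>g\<in>carrier G. \<forall>f\<in>carrier F. lt g f \<in> carrier F \<and> rt g f \<in> carrier G) \<and>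
     (\<forall>f\<in>carrier F. lt \<one>\<^bsub>G\<^esub> f = f) \<and>
     (\<forall>g\<in>carrier G. \<forall>g'\<in>carrier G. \<forall>f\<in>carrier F. lt (g \<otimes>\<^bsub>G\<^esub> g') f = lt g (lt g' f)) \<and>
     (\<forall>g\<in>carrier G. rt g \<one>\<^bsub>F\<^esub> = g) \<and>
     (\<forall>g\<in>carrier G. \<forall>f\<in>carrier F. \<forall>f'\<in>carrier F. rt g (f \<otimes>\<^bsub>F\<^esub> f') = rt (rt g f) f') \<and>
     (\<forall>g\<in>carrier G. \<forall>f\<in>carrier F. \<forall>f'\<in>carrier F.
        lt g (f \<otimes>\<^bsub>F\<^esub> f') = lt g f \<otimes>\<^bsub>F\<^esub> lt (rt g f) f') \<and>
     (\<forall>g\<in>carrier G. \<forall>g'\<in>carrier G. \<forall>f\<in>carrier F.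
        rt (g \<otimes>\<^bsub>G\<^esub> g') f = rt g (lt g' f) \<otimes>\<^bsub>G\<^esub> rt g' f)"

definition cocycles ::
  "('g,'a) monoid_scheme \<Rightarrow> ('f,'b) monoid_scheme \<Rightarrow> ('g \<Rightarrow> 'f \<Rightarrow> 'f) \<Rightarrow> ('g \<Rightarrow> 'f \<Rightarrow> 'g)
   \<Rightarrow> ('g \<Rightarrow> 'f \<Rightarrow> 'f \<Rightarrow> 'k::field) \<Rightarrow> ('g \<Rightarrow> 'g \<Rightarrow> 'f \<Rightarrow> 'k) \<Rightarrow> bool" where
  "cocycles G F lt rt \<sigma> \<tau> \<longleftrightarrow>
     (\<forall>g\<in>carrier G. \<forall>f\<in>carrier F. \<forall>f'\<in>carrier F. \<sigma> g f f' \<noteq> 0) \<and>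
     (\<forall>g\<in>carrier G. \<forall>g'\<in>carrier G. \<forall>f\<in>carrier F. \<tau> g g' f \<noteq> 0) \<and>
     (\<forall>g\<in>carrier G. \<forall>f\<in>carrier F. \<sigma> g \<one>\<^bsub>F\<^esub> f = 1 \<and> \<sigma> g f \<one>\<^bsub>F\<^esub> = 1) \<and>
     (\<forall>f\<in>carrier F. \<forall>f'\<in>carrier F. \<sigma> \<one>\<^bsub>G\<^esub> f f' = 1) \<and>
     (\<forall>g\<in>carrier G. \<forall>f\<in>carrier F. \<forall>f'\<in>carrier F. \<forall>f''\<in>carrier F.
        \<sigma> (rt g f) f' f'' * \<sigma> g f (f' \<otimes>\<^bsub>F\<^esub> f'') = \<sigma> g f f' * \<sigma> g (f \<otimes>\<^bsub>F\<^esub> f') f'') \<and>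
     (\<forall>g\<in>carrier G. \<forall>f\<in>carrier F. \<tau> \<one>\<^bsub>G\<^esub> g f = 1 \<and> \<tau> g \<one>\<^bsub>G\<^esub> f = 1) \<and>
     (\<forall>g\<in>carrier G. \<forall>g'\<in>carrier G. \<tau> g g' \<one>\<^bsub>F\<^esub> = 1) \<and>
     (\<forall>g\<in>carrier G. \<forall>g'\<in>carrier G. \<forall>g''\<in>carrier G. \<forall>f\<in>carrier F.
        \<tau> g g' (lt g'' f) * \<tau> (g \<otimes>\<^bsub>G\<^esub> g') g'' f = \<tau> g (g' \<otimes>\<^bsub>G\<^esub> g'') f * \<tau> g' g'' f) \<and>
     (\<forall>g\<in>carrier G. \<forall>g'\<in>carrier G. \<forall>f\<in>carrier F. \<forall>f'\<in>carrier F.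
        \<sigma> (g \<otimes>\<^bsub>G\<^esub> g') f f' * \<tau> g g' (f \<otimes>\<^bsub>F\<^esub> f') =
        \<sigma> g (lt g' f) (lt (rt g' f) f') * \<sigma> g' f f' * \<tau> g g' f * \<tau> (rt g (lt g' f)) (rt g' f) f')"

text \<open>The free space with basis indexed by a set B is modelled by finitely supported functions
  'b => 'k supported in B; the basis vector indexed by b is pb b.  For a vector space M,
  M tensor (free space on B) is modelled by finitely supported functions 'b => M:
  the element m tensor p_b is mt m b.  The free space on B1 tensor the free space on B2 is
  the free space on B1 x B2.\<close>

definition fsupp :: "('b \<Rightarrow> 'a::zero) \<Rightarrow> 'b set" where
  "fsupp u = {x. u x \<noteq> 0}"

definition pb :: "'b \<Rightarrow> 'b \<Rightarrow> 'k::{zero,one}" where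
  "pb b = (\<lambda>y. if y = b then 1 else 0)"

definition mt :: "'m::zero \<Rightarrow> 'b \<Rightarrow> 'b \<Rightarrow> 'm" where
  "mt m b = (\<lambda>y. if y = b then m else 0)"

definition sc :: "'k::times \<Rightarrow> ('b \<Rightarrow> 'k) \<Rightarrow> 'b \<Rightarrow> 'k" where
  "sc c u = (\<lambda>y. c * u y)"

definition scf :: "('k \<Rightarrow> 'm \<Rightarrow> 'm) \<Rightarrow> 'k \<Rightarrow> ('b \<Rightarrow> 'm) \<Rightarrow> 'b \<Rightarrow> 'm" where
  "scf scale c u = (\<lambda>y. scale c (u y))"

definition tensor :: "('b \<Rightarrow> 'k::times) \<Rightarrow> ('c \<Rightarrow> 'k) \<Rightarrow> 'b \<times> 'c \<Rightarrow> 'k" where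
  "tensor u w = (\<lambda>(y1, y2). u y1 * w y2)"

definition tensor_lin ::
  "('b \<Rightarrow> 'c \<Rightarrow> 'k::comm_ring_1) \<Rightarrow> ('b \<Rightarrow> 'd \<Rightarrow> 'k) \<Rightarrow> ('b \<times> 'b \<Rightarrow> 'k) \<Rightarrow> 'c \<times> 'd \<Rightarrow> 'k" where
  "tensor_lin \<phi> \<psi> w = (\<Sum>p\<in>fsupp w. sc (w p) (tensor (\<phi> (fst p)) (\<psi> (snd p))))"

(* (phi tensor id) for a linear map phi between free spaces *)
definition tensor_map_left ::
  "(('b \<Rightarrow> 'k) \<Rightarrow> 'c \<Rightarrow> 'k) \<Rightarrow> ('b \<times> 'd \<Rightarrow> 'k) \<Rightarrow> 'c \<times> 'd \<Rightarrow> 'k" where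
  "tensor_map_left \<phi> w = (\<lambda>(y1, y2). \<phi> (\<lambda>y. w (y, y2)) y1)"

text \<open>A coalgebra with basis B is given by the coproducts D b (in the free space on B x B)
  and counits e b of its basis vectors.  A right comodule (M, rho) with M a subspace of a
  vector space: rho m = sum_b (rho m b) tensor p_b.\<close>

definition right_comodule ::
  "('k::field \<Rightarrow> 'm::ab_group_add \<Rightarrow> 'm) \<Rightarrow> 'm set \<Rightarrow> 'c set \<Rightarrow> ('c \<Rightarrow> 'c \<times> 'c \<Rightarrow> 'k) \<Rightarrow> ('c \<Rightarrow> 'k)
   \<Rightarrow> ('m \<Rightarrow> 'c \<Rightarrow> 'm) \<Rightarrow> bool" where
  "right_comodule scale M B D e \<rho> \<longleftrightarrow>
     module.subspace scale M \<and>
     (\<forall>x\<in>M. \<forall>y\<in>M. \<rho> (x + y) = (\<lambda>c. \<rho> x c + \<rho> y c)) \<and>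
     (\<forall>a. \<forall>x\<in>M. \<rho> (scale a x) = (\<lambda>c. scale a (\<rho> x c))) \<and>
     (\<forall>x\<in>M. finite (fsupp (\<rho> x)) \<and> fsupp (\<rho> x) \<subseteq> B \<and> (\<forall>c. \<rho> x c \<in> M)) \<and>
     (\<forall>x\<in>M. \<forall>a b. \<rho> (\<rho> x b) a = (\<Sum>c\<in>fsupp (\<rho> x). scale (D c (a, b)) (\<rho> x c))) \<and>
     (\<forall>x\<in>M. (\<Sum>c\<in>fsupp (\<rho> x). scale (e c) (\<rho> x c)) = x)"

text \<open>Cotensor product of a right C-comodule (M, rhoM) with the free space N on BN carrying a
  left C-comodule structure rhoN (given on basis vectors, with values in C tensor N):
  the kernel of rhoM tensor id - id tensor rhoN inside M tensor N.\<close>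

definition cotensor ::
  "('k::field \<Rightarrow> 'm::ab_group_add \<Rightarrow> 'm) \<Rightarrow> 'm set \<Rightarrow> ('m \<Rightarrow> 'c \<Rightarrow> 'm) \<Rightarrow> 'n set
   \<Rightarrow> ('n \<Rightarrow> 'c \<times> 'n \<Rightarrow> 'k) \<Rightarrow> ('n \<Rightarrow> 'm) set" where
  "cotensor scale M \<rho>M BN \<rho>N =
     {w. finite (fsupp w) \<and> fsupp w \<subseteq> BN \<and> (\<forall>n. w n \<in> M) \<and>
         (\<forall>c n'. \<rho>M (w n') c = (\<Sum>n\<in>fsupp w. scale (\<rho>N n (c, n')) (w n)))}"

(* id tensor Delta on M tensor H, values in (M tensor H) tensor H (indexed by the last factor) *)
definition id_tensor_Delta ::
  "('k \<Rightarrow> 'm::ab_group_add \<Rightarrow> 'm) \<Rightarrow> ('n \<Rightarrow> 'n \<times> 'n \<Rightarrow> 'k) \<Rightarrow> ('n \<Rightarrow> 'm) \<Rightarrow> 'n \<Rightarrow> 'n \<Rightarrow> 'm" where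
  "id_tensor_Delta scale D w = (\<lambda>h2 h1. \<Sum>h\<in>fsupp w. scale (D h (h1, h2)) (w h))"

definition stab :: "('g,'a) monoid_scheme \<Rightarrow> ('g \<Rightarrow> 'f \<Rightarrow> 'f) \<Rightarrow> 'f \<Rightarrow> 'g set" where
  "stab G lt f = {g \<in> carrier G. lt g f = f}"

(* Delta(p_g # f') in H *)
definition H_Delta ::
  "('g,'a) monoid_scheme \<Rightarrow> ('g \<Rightarrow> 'f \<Rightarrow> 'f) \<Rightarrow> ('g \<Rightarrow> 'g \<Rightarrow> 'f \<Rightarrow> 'k::field)
   \<Rightarrow> 'g \<times> 'f \<Rightarrow> ('g \<times> 'f) \<times> ('g \<times> 'f) \<Rightarrow> 'k" where
  "H_Delta G lt \<tau> b = (case b of (g, f') \<Rightarrow>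
     (\<Sum>x\<in>carrier G. sc (\<tau> (g \<otimes>\<^bsub>G\<^esub> inv\<^bsub>G\<^esub> x) x f')
        (tensor (pb (g \<otimes>\<^bsub>G\<^esub> inv\<^bsub>G\<^esub> x, lt x f')) (pb (x, f')))))"

definition H_eps :: "('g,'a) monoid_scheme \<Rightarrow> 'g \<times> 'f \<Rightarrow> 'k::field" where
  "H_eps G b = (if fst b = \<one>\<^bsub>G\<^esub> then 1 else 0)"

definition Hp_Delta ::
  "('g,'a) monoid_scheme \<Rightarrow> ('g \<Rightarrow> 'f \<Rightarrow> 'f) \<Rightarrow> ('g \<Rightarrow> 'g \<Rightarrow> 'f \<Rightarrow> 'k::field) \<Rightarrow> 'f
   \<Rightarrow> 'g \<times> 'f \<Rightarrow> ('g \<times> 'f) \<times> ('g \<times> 'f) \<Rightarrow> 'k" where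
  "Hp_Delta G lt \<tau> f b = (case b of (g, f') \<Rightarrow>
     (\<Sum>x\<in>stab G lt f. sc (\<tau> (g \<otimes>\<^bsub>G\<^esub> inv\<^bsub>G\<^esub> x) x f')
        (tensor (pb (g \<otimes>\<^bsub>G\<^esub> inv\<^bsub>G\<^esub> x, lt x f')) (pb (x, f')))))"

definition C_Delta ::
  "('g,'a) monoid_scheme \<Rightarrow> ('g \<Rightarrow> 'f \<Rightarrow> 'f) \<Rightarrow> ('g \<Rightarrow> 'g \<Rightarrow> 'f \<Rightarrow> 'k::field) \<Rightarrow> 'f
   \<Rightarrow> 'g \<Rightarrow> 'g \<times> 'g \<Rightarrow> 'k" where
  "C_Delta G lt \<tau> f g =
     (\<Sum>x\<in>stab G lt f. sc (\<tau> (g \<otimes>\<^bsub>G\<^esub> inv\<^bsub>G\<^esub> x) x f)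
        (tensor (pb (g \<otimes>\<^bsub>G\<^esub> inv\<^bsub>G\<^esub> x)) (pb x)))"

definition C_eps :: "('g,'a) monoid_scheme \<Rightarrow> 'g \<Rightarrow> 'k::field" where
  "C_eps G g = (if g = \<one>\<^bsub>G\<^esub> then 1 else 0)"

definition pi_f :: "'g set \<Rightarrow> ('g \<times> 'f \<Rightarrow> 'k::zero) \<Rightarrow> 'g \<times> 'f \<Rightarrow> 'k" where
  "pi_f Gf u = (\<lambda>(g, f'). if g \<in> Gf then u (g, f') else 0)"

definition H_left_coaction ::
  "('g,'a) monoid_scheme \<Rightarrow> ('g \<Rightarrow> 'f \<Rightarrow> 'f) \<Rightarrow> ('g \<Rightarrow> 'g \<Rightarrow> 'f \<Rightarrow> 'k::field) \<Rightarrow> 'f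
   \<Rightarrow> 'g \<times> 'f \<Rightarrow> ('g \<times> 'f) \<times> ('g \<times> 'f) \<Rightarrow> 'k" where
  "H_left_coaction G lt \<tau> f h = tensor_map_left (pi_f (stab G lt f)) (H_Delta G lt \<tau> h)"

text \<open>V tensor kF is modelled as finitely supported functions 'f => 'v; v tensor f is vf v f,
  and V tensor kf is the subspace of those supported in {f}.\<close>

definition vf :: "'v::zero \<Rightarrow> 'f \<Rightarrow> 'f \<Rightarrow> 'v" where
  "vf v f = mt v f"

definition Vf :: "'f \<Rightarrow> ('f \<Rightarrow> 'v::zero) set" where
  "Vf f = {w. \<forall>f'. f' \<noteq> f \<longrightarrow> w f' = 0}"

definition rho' ::
  "('g,'a) monoid_scheme \<Rightarrow> ('g \<Rightarrow> 'f \<Rightarrow> 'f) \<Rightarrow> 'f \<Rightarrow> ('v::ab_group_add \<Rightarrow> 'g \<Rightarrow> 'v)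
   \<Rightarrow> ('f \<Rightarrow> 'v) \<Rightarrow> 'g \<times> 'f \<Rightarrow> 'f \<Rightarrow> 'v" where
  "rho' G lt f \<rho> w = (\<Sum>g\<in>stab G lt f. mt (vf (\<rho> (w f) g) f) (g, f))"

definition vfz ::
  "('k::field \<Rightarrow> 'v::ab_group_add \<Rightarrow> 'v) \<Rightarrow> ('g,'a) monoid_scheme \<Rightarrow> ('g \<Rightarrow> 'f \<Rightarrow> 'f)
   \<Rightarrow> ('g \<Rightarrow> 'g \<Rightarrow> 'f \<Rightarrow> 'k) \<Rightarrow> 'f \<Rightarrow> ('v \<Rightarrow> 'g \<Rightarrow> 'v) \<Rightarrow> 'v \<Rightarrow> 'g \<Rightarrow> 'g \<times> 'f \<Rightarrow> 'f \<Rightarrow> 'v" where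
  "vfz scale G lt \<tau> f \<rho> v z =
     (\<Sum>g\<in>stab G lt f. scf (scf scale) (\<tau> (g \<otimes>\<^bsub>G\<^esub> z) (inv\<^bsub>G\<^esub> z) f)
        (mt (vf (\<rho> v g) f) (g \<otimes>\<^bsub>G\<^esub> z, lt (inv\<^bsub>G\<^esub> z) f)))"

end

theory Submission
  imports Defs
begin

(* The coproduct of H gives an explicit formula for the
   coefficients of (id (x) Delta) on M (x) H (Delta_coeff), and its coassociativity is exactly the
   2-cocycle identity of tau.  For w in the cotensor product, the cotensor condition says that w(y, f')
   vanishes unless y |> f' = f, and that for g in G_f the g-component of w(y, f') is
   tau(g, y; f') w(g y, f').  Hence w is determined by its values at the base points
   (z, z^-1 |> f), z in T, which gives the direct sum decomposition indexed by T; the formula for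
   the coaction is then checked coefficientwise, again with the cocycle identity. *)

lemma sum_fun_apply: "(sum u A) x = (\<Sum>a\<in>A. u a x)"
  by (induction A rule: infinite_finite_induct) auto

lemma scf_apply [simp]: "scf s a u x = s a (u x)"
  by (simp add: scf_def)

lemma vector_space_scf: "vector_space s \<Longrightarrow> vector_space (scf s)"
  by (unfold_locales) (auto simp: scf_def fun_eq_iff vector_space.vector_space_assms)

lemma sum_fsupp_eq_sum_superset:
  assumes "finite A" "fsupp u \<subseteq> A" "\<And>c. s c 0 = 0"
  shows "(\<Sum>c\<in>fsupp u. s (k c) (u c)) = (\<Sum>c\<in>A. s (k c) (u c))"
  by (rule sum.mono_neutral_left) (use assms in \<open>auto simp: fsupp_def\<close>)

lemma fsupp_subsetD: "fsupp u \<subseteq> A \<Longrightarrow> x \<notin> A \<Longrightarrow> u x = 0"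
  by (auto simp: fsupp_def)

lemma vf_apply_self [simp]: "vf v f f = v"
  by (simp add: vf_def mt_def)

lemma vf_eq_0_iff [simp]: "vf v f = 0 \<longleftrightarrow> v = 0"
  by (simp add: vf_def mt_def fun_eq_iff)

lemma vf_add: "vf ((v::'v::monoid_add) + w) f = vf v f + vf w f"
  by (simp add: vf_def mt_def fun_eq_iff)

lemma vf_in_Vf: "vf v f \<in> Vf f"
  by (simp add: vf_def mt_def Vf_def)

lemma vf_apply_Vf: "u \<in> Vf f \<Longrightarrow> vf (u f) f = u"
  by (auto simp: vf_def mt_def fun_eq_iff Vf_def)

lemma zero_in_Vf: "0 \<in> Vf f"
  by (simp add: Vf_def)

lemma (in vector_space) scf_vf: "scf scale a (vf v f) = vf (scale a v) f"
  by (simp add: vf_def mt_def fun_eq_iff)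

lemma (in vector_space) scf_in_Vf: "u \<in> Vf f \<Longrightarrow> scf scale a u \<in> Vf f"
  by (simp add: Vf_def)

lemma (in vector_space) subspace_Vf: "module.subspace (scf scale) (Vf f)"
proof -
  interpret W: vector_space "scf scale" by (rule vector_space_scf) unfold_locales
  show ?thesis by (auto simp: W.subspace_def Vf_def)
qed

section \<open>Coefficients of the coproduct\<close>

locale cocycle_action = group G
  for G :: "('g, 'a) monoid_scheme" (structure) +
  fixes lt :: "'g \<Rightarrow> 'f \<Rightarrow> 'f" and Fc :: "'f set" and \<tau> :: "'g \<Rightarrow> 'g \<Rightarrow> 'f \<Rightarrow> 'k::field"
  assumes finite_carrier: "finite (carrier G)"
    and lt_closed: "\<And>g x. g \<in> carrier G \<Longrightarrow> x \<in> Fc \<Longrightarrow> lt g x \<in> Fc"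
    and lt_one: "\<And>x. x \<in> Fc \<Longrightarrow> lt \<one> x = x"
    and lt_mult: "\<And>g g' x. g \<in> carrier G \<Longrightarrow> g' \<in> carrier G \<Longrightarrow> x \<in> Fc \<Longrightarrow>
        lt (g \<otimes> g') x = lt g (lt g' x)"
    and tau_nonzero: "\<And>g g' x. g \<in> carrier G \<Longrightarrow> g' \<in> carrier G \<Longrightarrow> x \<in> Fc \<Longrightarrow> \<tau> g g' x \<noteq> 0"
    and tau_one_right: "\<And>g x. g \<in> carrier G \<Longrightarrow> x \<in> Fc \<Longrightarrow> \<tau> g \<one> x = 1"
    and tau_cocycle: "\<And>g g' g'' x. g \<in> carrier G \<Longrightarrow> g' \<in> carrier G \<Longrightarrow> g'' \<in> carrier G \<Longrightarrow> x \<in> Fc \<Longrightarrow>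
        \<tau> g g' (lt g'' x) * \<tau> (g \<otimes> g') g'' x = \<tau> g (g' \<otimes> g'') x * \<tau> g' g'' x"
begin

lemma eq_mult_inv_iff:
  "g \<in> carrier G \<Longrightarrow> y \<in> carrier G \<Longrightarrow> a = g \<otimes> inv y \<longleftrightarrow> a \<in> carrier G \<and> g = a \<otimes> y"
  by (metis inv_closed inv_solve_right m_closed)

lemma eq_inv_mult_iff:
  "x \<in> carrier G \<Longrightarrow> z \<in> carrier G \<Longrightarrow> y = inv x \<otimes> z \<longleftrightarrow> y \<in> carrier G \<and> x = z \<otimes> inv y"
  by (metis inv_closed inv_inv inv_mult_group inv_solve_left m_closed)

lemma lt_inv_eq: "h \<in> carrier G \<Longrightarrow> x \<in> Fc \<Longrightarrow> lt h x = y \<Longrightarrow> x = lt (inv h) y"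
  by (metis inv_closed l_inv lt_mult lt_one)

lemma H_Delta_apply:
  assumes "y \<in> carrier G"
  shows "H_Delta G lt \<tau> (y, f') ((y1, f1), (y2, f2)) =
    (if (y, f') = (y1 \<otimes> y2, f2) \<and> y1 \<in> carrier G \<and> y2 \<in> carrier G \<and> f1 = lt y2 f2
     then \<tau> y1 y2 f2 else 0)"
proof -
  have "H_Delta G lt \<tau> (y, f') ((y1, f1), (y2, f2)) = (\<Sum>x\<in>carrier G. if x = y2 then
     (if f2 = f' \<and> y1 = y \<otimes> inv y2 \<and> f1 = lt y2 f' then \<tau> y1 y2 f' else 0) else 0)"
    unfolding H_Delta_def prod.case sum_fun_apply
    by (intro sum.cong) (auto simp: sc_def tensor_def pb_def)
  also have "\<dots> = (if y2 \<in> carrier G \<and> f2 = f' \<and> y1 = y \<otimes> inv y2 \<and> f1 = lt y2 f' then \<tau> y1 y2 f' else 0)"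
    using finite_carrier by (simp add: sum.delta')
  finally show ?thesis
    using eq_mult_inv_iff[OF assms] by auto
qed

text \<open>\<open>Delta_coeff s w (y, f\<^sub>2) (a, b)\<close> is the coefficient of \<open>p\<^sub>a#b \<otimes> p\<^sub>y#f\<^sub>2\<close> in
  \<open>(id \<otimes> \<Delta>) w\<close>, for \<open>w \<in> M \<otimes> H\<close> and \<open>s\<close> the scalar multiplication of \<open>M\<close>.\<close>

definition Delta_coeff :: "('k \<Rightarrow> 'm \<Rightarrow> 'm) \<Rightarrow> ('g \<times> 'f \<Rightarrow> 'm) \<Rightarrow> 'g \<times> 'f \<Rightarrow> 'g \<times> 'f \<Rightarrow> 'm::zero" where
  "Delta_coeff s w = (\<lambda>(y, f2) (a, b). if y \<in> carrier G \<and> a \<in> carrier G \<and> b = lt y f2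
      then s (\<tau> a y f2) (w (a \<otimes> y, f2)) else 0)"

lemma Delta_coeff_apply:
  "Delta_coeff s w (y, f2) (a, b) = (if y \<in> carrier G \<and> a \<in> carrier G \<and> b = lt y f2
      then s (\<tau> a y f2) (w (a \<otimes> y, f2)) else 0)"
  by (simp add: Delta_coeff_def)

lemma id_tensor_Delta_eq_Delta_coeff:
  assumes "module s" and "finite (fsupp w)" and "fsupp w \<subseteq> carrier G \<times> UNIV"
  shows "id_tensor_Delta s (H_Delta G lt \<tau>) w = Delta_coeff s w"
proof (intro ext)
  fix h2 h1 :: "'g \<times> 'f"
  obtain y f2 a b where h: "h2 = (y, f2)" "h1 = (a, b)" by (cases h2, cases h1)
  have "id_tensor_Delta s (H_Delta G lt \<tau>) w h2 h1 =
     (\<Sum>h\<in>fsupp w. if h = (a \<otimes> y, f2) then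
        (if y \<in> carrier G \<and> a \<in> carrier G \<and> b = lt y f2 then s (\<tau> a y f2) (w h) else 0) else 0)"
    unfolding id_tensor_Delta_def h
  proof (intro sum.cong refl)
    fix h assume "h \<in> fsupp w"
    moreover obtain g f'' where h: "h = (g, f'')" by (cases h)
    ultimately have "g \<in> carrier G"
      using assms(3) by auto
    then show "s (H_Delta G lt \<tau> h ((a, b), y, f2)) (w h) =
        (if h = (a \<otimes> y, f2) then
        (if y \<in> carrier G \<and> a \<in> carrier G \<and> b = lt y f2 then s (\<tau> a y f2) (w h) else 0) else 0)"
      using assms(1) by (simp add: h H_Delta_apply module.scale_zero_left)
  qed
  also have "\<dots> = (if y \<in> carrier G \<and> a \<in> carrier G \<and> b = lt y f2 then s (\<tau> a y f2) (w (a \<otimes> y, f2)) else 0)"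
    using assms(1,2)
    by (cases "(a \<otimes> y, f2) \<in> fsupp w") (simp_all add: sum.delta' fsupp_def module.scale_zero_right)
  also have "\<dots> = Delta_coeff s w h2 h1"
    by (simp add: Delta_coeff_apply h)
  finally show "id_tensor_Delta s (H_Delta G lt \<tau>) w h2 h1 = Delta_coeff s w h2 h1" .
qed

lemma Delta_coeff_zero: "module s \<Longrightarrow> Delta_coeff s 0 n c = 0"
  by (cases n; cases c) (simp add: Delta_coeff_apply module.scale_zero_right)

lemma Delta_coeff_add: "module s \<Longrightarrow> Delta_coeff s (x + y) n c = Delta_coeff s x n c + Delta_coeff s y n c"
  by (cases n; cases c) (simp add: Delta_coeff_apply module.scale_right_distrib)

lemma Delta_coeff_scale:
  "module s \<Longrightarrow> Delta_coeff s (scf s a x) n c = s a (Delta_coeff s x n c)"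
  by (cases n; cases c) (simp add: Delta_coeff_apply module.scale_left_commute module.scale_zero_right)

lemma Delta_coeff_coassoc:
  assumes "module s" and "fsupp w \<subseteq> carrier G \<times> Fc"
  shows "Delta_coeff s (Delta_coeff s w (y2, f2)) (y1, f1) (p, q) =
    (if y1 \<in> carrier G \<and> y2 \<in> carrier G \<and> f1 = lt y2 f2
     then s (\<tau> y1 y2 f2) (Delta_coeff s w (y1 \<otimes> y2, f2) (p, q)) else 0)"
proof -
  note zero_right = module.scale_zero_right[OF assms(1)]
  consider "y1 \<notin> carrier G" | "y2 \<notin> carrier G" | "f1 \<noteq> lt y2 f2" | "p \<notin> carrier G" | "f2 \<notin> Fc"
    | "y1 \<in> carrier G" "y2 \<in> carrier G" "p \<in> carrier G" "f1 = lt y2 f2" "f2 \<in> Fc"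
    by blast
  then show ?thesis
  proof cases
    case 5
    then have "w (x, f2) = 0" for x
      by (simp add: fsupp_subsetD[OF assms(2)])
    then have "Delta_coeff s w (x, f2) = (\<lambda>_. 0)" for x
      by (auto simp: Delta_coeff_apply zero_right)
    then show ?thesis
      by (simp add: Delta_coeff_apply zero_right)
  next
    case 6
    note G = 6(1-3) and f1 = 6(4) and f2 = 6(5)
    have lt_eq: "lt y1 f1 = lt (y1 \<otimes> y2) f2"
      using G f1 f2 by (simp add: lt_mult)
    have coc: "\<tau> p y1 f1 * \<tau> (p \<otimes> y1) y2 f2 = \<tau> y1 y2 f2 * \<tau> p (y1 \<otimes> y2) f2"
      using tau_cocycle[OF G(3,1,2) f2] f1 by (simp add: mult.commute)
    have "Delta_coeff s (Delta_coeff s w (y2, f2)) (y1, f1) (p, q) =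
      (if q = lt (y1 \<otimes> y2) f2
       then s (\<tau> p y1 f1) (s (\<tau> (p \<otimes> y1) y2 f2) (w (p \<otimes> y1 \<otimes> y2, f2))) else 0)"
      using G f1 lt_eq by (simp add: Delta_coeff_apply)
    also have "\<dots> = s (\<tau> y1 y2 f2) (Delta_coeff s w (y1 \<otimes> y2, f2) (p, q))"
      using G by (simp add: Delta_coeff_apply coc m_assoc module.scale_scale[OF assms(1)] zero_right)
    finally show ?thesis
      using G f1 by simp
  qed (simp_all add: Delta_coeff_apply zero_right)
qed

lemma sum_mt_apply:
  assumes "module s" and z: "z \<in> carrier G"
  shows "(\<Sum>x\<in>carrier G. scf (scf s) (c x) (mt (M x) (inv x \<otimes> z, f0))) (y, f2) (a, b) =
    (if y \<in> carrier G \<and> f2 = f0 then s (c (z \<otimes> inv y)) (M (z \<otimes> inv y) (a, b)) else 0)"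
proof -
  have "(\<Sum>x\<in>carrier G. scf (scf s) (c x) (mt (M x) (inv x \<otimes> z, f0))) (y, f2) (a, b) =
      (\<Sum>x\<in>carrier G. if x = z \<otimes> inv y then
        (if y \<in> carrier G \<and> f2 = f0 then s (c x) (M x (a, b)) else 0) else 0)"
    unfolding sum_fun_apply
    by (intro sum.cong refl)
      (use eq_inv_mult_iff[OF _ z] assms(1) in \<open>auto simp: mt_def module.scale_zero_right\<close>)
  also have "\<dots> = (if y \<in> carrier G \<and> f2 = f0 then s (c (z \<otimes> inv y)) (M (z \<otimes> inv y) (a, b)) else 0)"
    using finite_carrier z by (auto simp: sum.delta')
  finally show ?thesis .
qed

end

section \<open>The stabiliser coalgebra and its comodules\<close>

lemma cocycle_action_of_matched_pair:
  assumes "matched_pair G F lt rt" and "cocycles G F lt rt \<sigma> \<tau>"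
  shows "cocycle_action G lt (carrier F) \<tau>"
  using assms unfolding matched_pair_def cocycles_def cocycle_action_def cocycle_action_axioms_def
  by auto

locale stab_comodule = cocycle_action G lt Fc \<tau> + V: vector_space scale
  for G :: "('g, 'a) monoid_scheme" (structure) and lt Fc
    and \<tau> :: "'g \<Rightarrow> 'g \<Rightarrow> 'f \<Rightarrow> 'k::field" and scale :: "'k \<Rightarrow> 'v::ab_group_add \<Rightarrow> 'v" +
  fixes f :: 'f and \<rho> :: "'v \<Rightarrow> 'g \<Rightarrow> 'v"
  assumes f_in: "f \<in> Fc"
    and comodule: "right_comodule scale UNIV (stab G lt f) (C_Delta G lt \<tau> f) (C_eps G) \<rho>"
begin

abbreviation "Gf \<equiv> stab G lt f"

lemma stab_subset: "Gf \<subseteq> carrier G"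
  by (auto simp: stab_def)

lemma stab_carrier: "g \<in> Gf \<Longrightarrow> g \<in> carrier G"
  by (simp add: stab_def)

lemma lt_stab: "g \<in> Gf \<Longrightarrow> lt g f = f"
  by (simp add: stab_def)

lemma stab_subgroup: "subgroup Gf G"
proof
  show "Gf \<subseteq> carrier G" by (rule stab_subset)
  show "\<one> \<in> Gf" using f_in by (auto simp: stab_def lt_one)
  fix x y assume "x \<in> Gf" "y \<in> Gf"
  then show "x \<otimes> y \<in> Gf" using f_in by (auto simp: stab_def lt_mult)
next
  fix x assume "x \<in> Gf"
  then show "inv x \<in> Gf"
    using f_in lt_inv_eq[of x f f] by (auto simp: stab_def)
qed

lemma one_in_stab: "\<one> \<in> Gf"
  using stab_subgroup by (rule subgroup.one_closed)

lemma inv_in_stab: "g \<in> Gf \<Longrightarrow> inv g \<in> Gf"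
  using stab_subgroup by (rule subgroup.m_inv_closed)

lemma finite_stab: "finite Gf"
  using finite_carrier stab_subset by (rule finite_subset[rotated])

lemma stab_mult_left_iff: "b \<in> Gf \<Longrightarrow> a \<in> carrier G \<Longrightarrow> a \<otimes> b \<in> Gf \<longleftrightarrow> a \<in> Gf"
  using stab_subgroup stab_subset
  by (metis inv_solve_right subgroup.m_closed subgroup.m_inv_closed subsetD)

lemma stab_mult_right_iff: "a \<in> Gf \<Longrightarrow> b \<in> carrier G \<Longrightarrow> a \<otimes> b \<in> Gf \<longleftrightarrow> b \<in> Gf"
  using stab_subgroup stab_subset
  by (metis inv_solve_left subgroup.m_closed subgroup.m_inv_closed subsetD)

lemma rho_add: "\<rho> (x + y) = (\<lambda>c. \<rho> x c + \<rho> y c)"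
  using comodule by (simp add: right_comodule_def)

lemma rho_scale: "\<rho> (scale a x) = (\<lambda>c. scale a (\<rho> x c))"
  using comodule by (simp add: right_comodule_def)

lemma rho_zero: "\<rho> 0 = (\<lambda>c. 0)"
  using rho_scale[of 0 0] by simp

lemma finite_fsupp_rho: "finite (fsupp (\<rho> x))" and fsupp_rho: "fsupp (\<rho> x) \<subseteq> Gf"
  using comodule by (auto simp: right_comodule_def)

lemma C_Delta_apply:
  "C_Delta G lt \<tau> f c (a, b) = (if b \<in> Gf \<and> a = c \<otimes> inv b then \<tau> a b f else 0)"
proof -
  have "C_Delta G lt \<tau> f c (a, b) =
      (\<Sum>x\<in>Gf. if x = b then (if a = c \<otimes> inv b then \<tau> a b f else 0) else 0)"
    unfolding C_Delta_def sum_fun_apply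
    by (intro sum.cong) (auto simp: sc_def tensor_def pb_def)
  also have "\<dots> = (if b \<in> Gf \<and> a = c \<otimes> inv b then \<tau> a b f else 0)"
    using finite_stab by (simp add: sum.delta')
  finally show ?thesis .
qed

lemma rho_counit: "\<rho> x \<one> = x"
proof -
  have "(\<Sum>c\<in>fsupp (\<rho> x). scale (C_eps G c) (\<rho> x c)) = x"
    using comodule by (simp add: right_comodule_def)
  moreover have "(\<Sum>c\<in>fsupp (\<rho> x). scale (C_eps G c) (\<rho> x c)) = \<rho> x \<one>"
  proof (cases "\<one> \<in> fsupp (\<rho> x)")
    case True
    then show ?thesis
      using finite_fsupp_rho
      by (simp add: C_eps_def if_distrib[of "\<lambda>a. scale a _"] sum.delta' cong: if_cong)
  next
    case False
    then show ?thesis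
      by (auto simp: C_eps_def fsupp_def intro!: sum.neutral)
  qed
  ultimately show ?thesis by simp
qed

lemma rho_coassoc:
  "\<rho> (\<rho> x b) a = (if b \<in> Gf \<and> a \<in> carrier G then scale (\<tau> a b f) (\<rho> x (a \<otimes> b)) else 0)"
proof -
  have "\<rho> (\<rho> x b) a = (\<Sum>c\<in>fsupp (\<rho> x). scale (C_Delta G lt \<tau> f c (a, b)) (\<rho> x c))"
    using comodule by (simp add: right_comodule_def)
  also have "\<dots> = (\<Sum>c\<in>fsupp (\<rho> x). if c = a \<otimes> b then
      (if b \<in> Gf \<and> a \<in> carrier G then scale (\<tau> a b f) (\<rho> x c) else 0) else 0)"
  proof (intro sum.cong refl)
    fix c assume "c \<in> fsupp (\<rho> x)"
    then have "c \<in> carrier G" using fsupp_rho stab_subset by blast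
    then show "scale (C_Delta G lt \<tau> f c (a, b)) (\<rho> x c) = (if c = a \<otimes> b then
        (if b \<in> Gf \<and> a \<in> carrier G then scale (\<tau> a b f) (\<rho> x c) else 0) else 0)"
      using stab_subset by (auto simp: C_Delta_apply m_assoc)
  qed
  also have "\<dots> = (if b \<in> Gf \<and> a \<in> carrier G then scale (\<tau> a b f) (\<rho> x (a \<otimes> b)) else 0)"
    using finite_fsupp_rho by (auto simp: sum.delta' fsupp_def)
  finally show ?thesis .
qed

lemma Hp_Delta_apply:
  "Hp_Delta G lt \<tau> f (g, f') ((a1, b1), (a2, b2)) =
   (if a2 \<in> Gf \<and> b2 = f' \<and> a1 = g \<otimes> inv a2 \<and> b1 = lt a2 f' then \<tau> a1 a2 f' else 0)"
proof -
  have "Hp_Delta G lt \<tau> f (g, f') ((a1, b1), (a2, b2)) = (\<Sum>x\<in>Gf. if x = a2 then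
     (if b2 = f' \<and> a1 = g \<otimes> inv a2 \<and> b1 = lt a2 f' then \<tau> a1 a2 f' else 0) else 0)"
    unfolding Hp_Delta_def prod.case sum_fun_apply
    by (intro sum.cong) (auto simp: sc_def tensor_def pb_def)
  also have "\<dots> = (if a2 \<in> Gf \<and> b2 = f' \<and> a1 = g \<otimes> inv a2 \<and> b1 = lt a2 f' then \<tau> a1 a2 f' else 0)"
    using finite_stab by (simp add: sum.delta')
  finally show ?thesis .
qed

theorem stab_coalgebra_embedding:
  "(\<forall>g\<in>Gf. fsupp (Hp_Delta G lt \<tau> f (g, f)) \<subseteq> (Gf \<times> {f}) \<times> (Gf \<times> {f}))
   \<and> bij_betw (\<lambda>g. (g, f)) Gf (Gf \<times> {f})
   \<and> (\<forall>g\<in>Gf.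
        Hp_Delta G lt \<tau> f (g, f) = tensor_lin (\<lambda>a. pb (a, f)) (\<lambda>a. pb (a, f)) (C_Delta G lt \<tau> f g)
        \<and> H_eps G (g, f) = (C_eps G g :: 'k))"
proof (intro conjI ballI)
  fix g assume g: "g \<in> Gf"
  show "fsupp (Hp_Delta G lt \<tau> f (g, f)) \<subseteq> (Gf \<times> {f}) \<times> (Gf \<times> {f})"
  proof
    fix p assume p: "p \<in> fsupp (Hp_Delta G lt \<tau> f (g, f))"
    obtain a1 b1 a2 b2 where pe: "p = ((a1, b1), (a2, b2))" by (metis prod.collapse)
    from p have "a2 \<in> Gf \<and> b2 = f \<and> a1 = g \<otimes> inv a2 \<and> b1 = lt a2 f"
      by (simp add: pe fsupp_def Hp_Delta_apply split: if_splits)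
    then show "p \<in> (Gf \<times> {f}) \<times> (Gf \<times> {f})"
      using g stab_subgroup
      by (auto simp: pe lt_stab intro: subgroup.m_closed subgroup.m_inv_closed)
  qed
  have fin: "finite (fsupp (C_Delta G lt \<tau> f g))"
    by (rule finite_subset[of _ "carrier G \<times> carrier G"])
      (use g finite_carrier in \<open>auto simp: fsupp_def C_Delta_apply stab_carrier split: if_splits\<close>)
  show "Hp_Delta G lt \<tau> f (g, f) = tensor_lin (\<lambda>a. pb (a, f)) (\<lambda>a. pb (a, f)) (C_Delta G lt \<tau> f g)"
  proof (rule ext)
    fix p :: "('g \<times> 'f) \<times> ('g \<times> 'f)"
    obtain a1 b1 a2 b2 where pe: "p = ((a1, b1), (a2, b2))" by (metis prod.collapse)
    have "tensor_lin (\<lambda>a. pb (a, f)) (\<lambda>a. pb (a, f)) (C_Delta G lt \<tau> f g) p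
       = (\<Sum>q\<in>fsupp (C_Delta G lt \<tau> f g).
            if q = (a1, a2) then (if b1 = f \<and> b2 = f then C_Delta G lt \<tau> f g q else 0) else 0)"
      unfolding tensor_lin_def sum_fun_apply pe
      by (intro sum.cong refl) (auto simp: sc_def tensor_def pb_def)
    also have "\<dots> = (if b1 = f \<and> b2 = f then C_Delta G lt \<tau> f g (a1, a2) else 0)"
      using fin by (auto simp: sum.delta' fsupp_def)
    also have "\<dots> = Hp_Delta G lt \<tau> f (g, f) p"
      unfolding pe Hp_Delta_apply C_Delta_apply by (auto simp: lt_stab)
    finally show "Hp_Delta G lt \<tau> f (g, f) p =
        tensor_lin (\<lambda>a. pb (a, f)) (\<lambda>a. pb (a, f)) (C_Delta G lt \<tau> f g) p" ..
  qed
  show "H_eps G (g, f) = (C_eps G g :: 'k)"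
    by (simp add: H_eps_def C_eps_def)
qed (auto simp: bij_betw_def inj_on_def)

abbreviation "\<rho>' \<equiv> rho' G lt f \<rho>"

lemma rho'_apply: "\<rho>' w (a, b) = (if a \<in> Gf \<and> b = f then vf (\<rho> (w f) a) f else 0)"
proof -
  have "\<rho>' w (a, b) = (\<Sum>g\<in>Gf. if g = a then (if b = f then vf (\<rho> (w f) a) f else 0) else 0)"
    unfolding rho'_def sum_fun_apply[where x = "(a, b)"] by (intro sum.cong) (auto simp: mt_def)
  also have "\<dots> = (if a \<in> Gf \<and> b = f then vf (\<rho> (w f) a) f else 0)"
    using finite_stab by (simp add: sum.delta')
  finally show ?thesis .
qed

lemma rho'_add: "\<rho>' (x + y) = (\<lambda>c. \<rho>' x c + \<rho>' y c)"
  by (intro ext, case_tac c) (simp add: rho'_apply rho_add vf_add)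

lemma rho'_scale: "\<rho>' (scf scale a x) = (\<lambda>c. scf scale a (\<rho>' x c))"
  by (intro ext, case_tac c) (simp add: rho'_apply rho_scale vf_def mt_def)

lemma rho'_zero: "\<rho>' 0 c = 0"
  by (cases c) (simp add: rho'_apply rho_zero)

lemma fsupp_rho': "fsupp (\<rho>' x) \<subseteq> Gf \<times> {f}"
  by (auto simp: fsupp_def rho'_apply split: if_splits)

lemma finite_fsupp_rho': "finite (fsupp (\<rho>' x))"
  using fsupp_rho' finite_stab by (meson finite_SigmaI finite.emptyI finite_insert finite_subset)

lemma rho'_in_Vf: "\<rho>' x c \<in> Vf f"
  by (cases c) (simp add: rho'_apply vf_in_Vf zero_in_Vf)

sublocale W: vector_space "scf scale"
  by (rule vector_space_scf) unfold_locales

lemma rho'_coassoc: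
  "\<rho>' (\<rho>' x b) a = (\<Sum>c\<in>fsupp (\<rho>' x). scf scale (Hp_Delta G lt \<tau> f c (a, b)) (\<rho>' x c))"
proof -
  obtain ga fa gb fb where ab: "a = (ga, fa)" "b = (gb, fb)" by (cases a, cases b)
  have "(\<Sum>c\<in>fsupp (\<rho>' x). scf scale (Hp_Delta G lt \<tau> f c (a, b)) (\<rho>' x c))
      = (\<Sum>c\<in>Gf \<times> {f}. scf scale (Hp_Delta G lt \<tau> f c (a, b)) (\<rho>' x c))"
    by (rule sum_fsupp_eq_sum_superset) (use fsupp_rho' finite_stab in auto)
  also have "\<dots> = (\<Sum>c\<in>Gf \<times> {f}. if c = (ga \<otimes> gb, f) then
      (if ga \<in> carrier G \<and> gb \<in> Gf \<and> fb = f \<and> fa = f then scf scale (\<tau> ga gb f) (\<rho>' x c) else 0) else 0)"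
  proof (intro sum.cong refl)
    fix c assume "c \<in> Gf \<times> {f}"
    then obtain gc where c: "c = (gc, f)" "gc \<in> carrier G" using stab_subset by auto
    show "scf scale (Hp_Delta G lt \<tau> f c (a, b)) (\<rho>' x c) = (if c = (ga \<otimes> gb, f) then
      (if ga \<in> carrier G \<and> gb \<in> Gf \<and> fb = f \<and> fa = f then scf scale (\<tau> ga gb f) (\<rho>' x c) else 0) else 0)"
      unfolding ab c Hp_Delta_apply using eq_mult_inv_iff[OF c(2)] stab_subset
      by (auto simp: lt_stab)
  qed
  also have "\<dots> = (if ga \<in> carrier G \<and> gb \<in> Gf \<and> fb = f \<and> fa = f
      then scf scale (\<tau> ga gb f) (\<rho>' x (ga \<otimes> gb, f)) else 0)"
    using finite_stab by (auto simp: sum.delta' rho'_apply)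
  also have "\<dots> = \<rho>' (\<rho>' x b) a"
    unfolding ab rho'_apply using stab_subset stab_mult_left_iff
    by (auto simp: rho_coassoc rho_zero V.scf_vf)
  finally show ?thesis by simp
qed

lemma rho'_counit:
  assumes "x \<in> Vf f"
  shows "(\<Sum>c\<in>fsupp (\<rho>' x). scf scale (H_eps G c) (\<rho>' x c)) = x"
proof -
  have "(\<Sum>c\<in>fsupp (\<rho>' x). scf scale (H_eps G c) (\<rho>' x c)) =
      (\<Sum>c\<in>Gf \<times> {f}. scf scale (H_eps G c) (\<rho>' x c))"
    by (rule sum_fsupp_eq_sum_superset) (use fsupp_rho' finite_stab in auto)
  also have "\<dots> = (\<Sum>c\<in>Gf \<times> {f}. if c = (\<one>, f) then \<rho>' x c else 0)"
    by (intro sum.cong refl) (auto simp: H_eps_def fun_eq_iff)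
  also have "\<dots> = x"
    using finite_stab one_in_stab assms by (simp add: rho'_apply rho_counit vf_apply_Vf)
  finally show ?thesis .
qed

theorem right_comodule_rho':
  "right_comodule (scf scale) (Vf f) (Gf \<times> Fc) (Hp_Delta G lt \<tau> f) (H_eps G) \<rho>'"
proof -
  have "fsupp (\<rho>' x) \<subseteq> Gf \<times> Fc" for x
    using fsupp_rho'[of x] f_in by auto
  then show ?thesis
    unfolding right_comodule_def
    using V.subspace_Vf rho'_add rho'_scale finite_fsupp_rho' rho'_in_Vf rho'_coassoc rho'_counit
    by auto
qed

section \<open>The cotensor product\<close>

lemma H_left_coaction_apply:
  "H_left_coaction G lt \<tau> f n (c, n') = (if fst c \<in> Gf then H_Delta G lt \<tau> n (c, n') else 0)"
  by (cases c) (simp add: H_left_coaction_def tensor_map_left_def pi_f_def)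

lemma sum_H_left_coaction:
  assumes "finite (fsupp w)" "fsupp w \<subseteq> carrier G \<times> Fc"
  shows "(\<Sum>n\<in>fsupp w. scf scale (H_left_coaction G lt \<tau> f n (c, n')) (w n)) =
    (if fst c \<in> Gf then Delta_coeff (scf scale) w n' c else 0)"
proof -
  have "fsupp w \<subseteq> carrier G \<times> UNIV"
    using assms(2) by auto
  then have "id_tensor_Delta (scf scale) (H_Delta G lt \<tau>) w n' c = Delta_coeff (scf scale) w n' c"
    using id_tensor_Delta_eq_Delta_coeff[OF W.module_axioms assms(1)] by simp
  then show ?thesis
    by (simp add: H_left_coaction_apply id_tensor_Delta_def)
qed

abbreviation "Vt \<equiv> cotensor (scf scale) (Vf f) \<rho>' (carrier G \<times> Fc) (H_left_coaction G lt \<tau> f)"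

lemma mem_Vt_iff:
  "w \<in> Vt \<longleftrightarrow> finite (fsupp w) \<and> fsupp w \<subseteq> carrier G \<times> Fc \<and> (\<forall>n. w n \<in> Vf f) \<and>
    (\<forall>c n. \<rho>' (w n) c = (if fst c \<in> Gf then Delta_coeff (scf scale) w n c else 0))"
proof (cases "finite (fsupp w) \<and> fsupp w \<subseteq> carrier G \<times> Fc")
  case True
  then show ?thesis
    unfolding cotensor_def mem_Collect_eq by (simp add: sum_H_left_coaction)
next
  case False
  then show ?thesis
    unfolding cotensor_def by blast
qed

lemma Vt_D:
  assumes "w \<in> Vt"
  shows finite_fsupp_Vt: "finite (fsupp w)" and fsupp_Vt: "fsupp w \<subseteq> carrier G \<times> Fc"
    and Vt_in_Vf: "w n \<in> Vf f"
    and rho'_Vt: "\<rho>' (w n) c = (if fst c \<in> Gf then Delta_coeff (scf scale) w n c else 0)"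
  using assms unfolding mem_Vt_iff by blast+

lemma Vt_nonzero_lt:
  assumes w: "w \<in> Vt" and nz: "w (y, f2) \<noteq> 0"
  shows "y \<in> carrier G \<and> f2 \<in> Fc \<and> lt y f2 = f"
proof -
  have yf: "y \<in> carrier G" "f2 \<in> Fc"
    using fsupp_Vt[OF w] nz by (auto simp: fsupp_def)
  have "w (y, f2) = \<rho>' (w (y, f2)) (\<one>, f)"
    using one_in_stab by (simp add: rho'_apply rho_counit vf_apply_Vf[OF Vt_in_Vf[OF w]])
  also have "\<dots> = Delta_coeff (scf scale) w (y, f2) (\<one>, f)"
    using rho'_Vt[OF w, of "(y, f2)" "(\<one>, f)"] one_in_stab by simp
  finally have "w (y, f2) = Delta_coeff (scf scale) w (y, f2) (\<one>, f)" .
  moreover have "Delta_coeff (scf scale) w (y, f2) (\<one>, f) = 0" if "f \<noteq> lt y f2"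
    using that by (simp add: Delta_coeff_apply)
  ultimately have "f = lt y f2"
    using nz by metis
  with yf show ?thesis by simp
qed

lemma zero_in_Vt: "0 \<in> Vt"
  unfolding mem_Vt_iff
  by (simp add: fsupp_def zero_in_Vf rho'_zero Delta_coeff_zero W.module_axioms)

lemma add_in_Vt:
  assumes x: "x \<in> Vt" and y: "y \<in> Vt"
  shows "x + y \<in> Vt"
proof -
  have sub: "fsupp (x + y) \<subseteq> fsupp x \<union> fsupp y"
    by (auto simp: fsupp_def)
  then have fin: "finite (fsupp (x + y))"
    by (rule finite_subset) (simp add: finite_fsupp_Vt[OF x] finite_fsupp_Vt[OF y])
  from sub have sub': "fsupp (x + y) \<subseteq> carrier G \<times> Fc"
    using fsupp_Vt[OF x] fsupp_Vt[OF y] by blast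
  have vf: "(x + y) n \<in> Vf f" for n
    using Vt_in_Vf[OF x] Vt_in_Vf[OF y] by (simp add: Vf_def)
  have cond: "\<rho>' ((x + y) n) c = (if fst c \<in> Gf then Delta_coeff (scf scale) (x + y) n c else 0)" for n c
    using rho'_Vt[OF x, of n c] rho'_Vt[OF y, of n c] by (simp add: rho'_add Delta_coeff_add W.module_axioms)
  show ?thesis
    unfolding mem_Vt_iff by (intro conjI allI fin sub' vf cond)
qed

lemma scale_in_Vt:
  assumes x: "x \<in> Vt"
  shows "scf (scf scale) a x \<in> Vt"
proof -
  have sub: "fsupp (scf (scf scale) a x) \<subseteq> fsupp x"
    by (auto simp: fsupp_def)
  then have fin: "finite (fsupp (scf (scf scale) a x))"
    by (rule finite_subset) (rule finite_fsupp_Vt[OF x])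
  from sub have sub': "fsupp (scf (scf scale) a x) \<subseteq> carrier G \<times> Fc"
    using fsupp_Vt[OF x] by blast
  have vf: "scf (scf scale) a x n \<in> Vf f" for n
    using Vt_in_Vf[OF x] by (simp add: Vf_def)
  have cond: "\<rho>' (scf (scf scale) a x n) c =
      (if fst c \<in> Gf then Delta_coeff (scf scale) (scf (scf scale) a x) n c else 0)" for n c
    using rho'_Vt[OF x, of n c] by (simp add: rho'_scale Delta_coeff_scale W.module_axioms)
  show ?thesis
    unfolding mem_Vt_iff by (intro conjI allI fin sub' vf cond)
qed

lemma id_tensor_Delta_Vt: "x \<in> Vt \<Longrightarrow> id_tensor_Delta (scf scale) (H_Delta G lt \<tau>) x = Delta_coeff (scf scale) x"
  using fsupp_Vt by (intro id_tensor_Delta_eq_Delta_coeff W.module_axioms finite_fsupp_Vt) blast+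

lemma fsupp_Delta_coeff_Vt:
  assumes "x \<in> Vt"
  shows "fsupp (Delta_coeff (scf scale) x) \<subseteq> carrier G \<times> snd ` fsupp x"
proof
  fix n assume n: "n \<in> fsupp (Delta_coeff (scf scale) x)"
  obtain y f2 where ne: "n = (y, f2)" by (cases n)
  from n obtain a b where "Delta_coeff (scf scale) x (y, f2) (a, b) \<noteq> 0"
    unfolding ne fsupp_def by (auto simp: fun_eq_iff)
  then have "y \<in> carrier G" "x (a \<otimes> y, f2) \<noteq> 0"
    by (auto simp: Delta_coeff_apply split: if_splits)
  then show "n \<in> carrier G \<times> snd ` fsupp x"
    unfolding ne fsupp_def by force
qed

lemma finite_snd_fsupp_Vt:
  assumes "x \<in> Vt"
  shows "finite (snd ` fsupp x) \<and> snd ` fsupp x \<subseteq> Fc"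
  using finite_fsupp_Vt[OF assms] fsupp_Vt[OF assms] by auto

lemma rho'_Delta_coeff_Vt:
  assumes x: "x \<in> Vt"
  shows "\<rho>' (Delta_coeff (scf scale) x (y2, f2) n) c =
    (if fst c \<in> Gf then Delta_coeff (scf scale) (Delta_coeff (scf scale) x (y2, f2)) n c else 0)"
proof -
  let ?u = "Delta_coeff (scf scale) x (y2, f2)"
  obtain y1 f1 p q where nc: "n = (y1, f1)" "c = (p, q)" by (cases n, cases c)
  show ?thesis
  proof (cases "y1 \<in> carrier G \<and> y2 \<in> carrier G \<and> f1 = lt y2 f2")
    case True
    then have "\<rho>' (?u n) c = scf scale (\<tau> y1 y2 f2) (\<rho>' (x (y1 \<otimes> y2, f2)) c)"
      by (simp add: nc Delta_coeff_apply rho'_scale)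
    also have "\<dots> = (if fst c \<in> Gf then Delta_coeff (scf scale) ?u n c else 0)"
      using True by (simp add: rho'_Vt[OF x] nc Delta_coeff_coassoc[OF W.module_axioms fsupp_Vt[OF x]])
    finally show ?thesis .
  next
    case False
    then have "?u n = 0"
      by (auto simp: nc Delta_coeff_apply fun_eq_iff)
    moreover have "Delta_coeff (scf scale) ?u n c = 0"
      unfolding nc Delta_coeff_coassoc[OF W.module_axioms fsupp_Vt[OF x]] using False by (rule if_not_P)
    ultimately show ?thesis
      by (simp add: rho'_zero)
  qed
qed

lemma Delta_coeff_in_Vt:
  assumes x: "x \<in> Vt"
  shows "Delta_coeff (scf scale) x (y2, f2) \<in> Vt"
proof -
  let ?u = "Delta_coeff (scf scale) x (y2, f2)"
  have sub: "fsupp ?u \<subseteq> carrier G \<times> {lt y2 f2}"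
    by (auto simp: fsupp_def Delta_coeff_apply split: if_splits)
  then have fin: "finite (fsupp ?u)"
    by (rule finite_subset) (simp add: finite_carrier)
  have fsupp_u: "fsupp ?u \<subseteq> carrier G \<times> Fc"
  proof (cases "y2 \<in> carrier G \<and> f2 \<in> Fc")
    case True
    then show ?thesis
      using sub lt_closed by auto
  next
    case False
    then have "?u = 0"
      using fsupp_subsetD[OF fsupp_Vt[OF x]] by (auto simp: fun_eq_iff Delta_coeff_apply)
    then show ?thesis
      by (simp add: fsupp_def)
  qed
  moreover have "?u n \<in> Vf f" for n
    by (cases n) (simp add: Delta_coeff_apply zero_in_Vf V.scf_in_Vf Vt_in_Vf[OF x])
  ultimately show ?thesis
    using fin fsupp_u rho'_Delta_coeff_Vt[OF x] unfolding mem_Vt_iff by blast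
qed

abbreviation "rt' \<equiv> id_tensor_Delta (scf scale) (H_Delta G lt \<tau>)"

lemma rt'_coassoc:
  assumes x: "x \<in> Vt"
  shows "rt' (rt' x b) a = (\<Sum>c\<in>fsupp (rt' x). scf (scf scale) (H_Delta G lt \<tau> c (a, b)) (rt' x c))"
proof -
  obtain y1 f1 y2 f2 where ab: "a = (y1, f1)" "b = (y2, f2)" by (cases a, cases b)
  let ?P = "carrier G \<times> snd ` fsupp x"
  have finP: "finite ?P"
    using finite_carrier finite_snd_fsupp_Vt[OF x] by simp
  have "(\<Sum>c\<in>fsupp (rt' x). scf (scf scale) (H_Delta G lt \<tau> c (a, b)) (rt' x c))
      = (\<Sum>c\<in>?P. scf (scf scale) (H_Delta G lt \<tau> c (a, b)) (Delta_coeff (scf scale) x c))"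
    unfolding id_tensor_Delta_Vt[OF x]
    by (rule sum_fsupp_eq_sum_superset[OF finP fsupp_Delta_coeff_Vt[OF x]]) (simp add: fun_eq_iff)
  also have "\<dots> = (\<Sum>c\<in>?P. if c = (y1 \<otimes> y2, f2) then
      (if y1 \<in> carrier G \<and> y2 \<in> carrier G \<and> f1 = lt y2 f2
       then scf (scf scale) (\<tau> y1 y2 f2) (Delta_coeff (scf scale) x c) else 0) else 0)"
  proof (intro sum.cong refl)
    fix c assume "c \<in> ?P"
    moreover obtain y f' where "c = (y, f')" by (cases c)
    ultimately show "scf (scf scale) (H_Delta G lt \<tau> c (a, b)) (Delta_coeff (scf scale) x c) =
      (if c = (y1 \<otimes> y2, f2) then (if y1 \<in> carrier G \<and> y2 \<in> carrier G \<and> f1 = lt y2 f2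
       then scf (scf scale) (\<tau> y1 y2 f2) (Delta_coeff (scf scale) x c) else 0) else 0)"
      by (auto simp: ab H_Delta_apply fun_eq_iff)
  qed
  also have "\<dots> = (if y1 \<in> carrier G \<and> y2 \<in> carrier G \<and> f1 = lt y2 f2
      then scf (scf scale) (\<tau> y1 y2 f2) (Delta_coeff (scf scale) x (y1 \<otimes> y2, f2)) else 0)"
  proof -
    have "(y1 \<otimes> y2, f2) \<notin> ?P \<Longrightarrow> Delta_coeff (scf scale) x (y1 \<otimes> y2, f2) = 0"
      using fsupp_Delta_coeff_Vt[OF x] by (auto simp: fsupp_def)
    then show ?thesis
      using finP by (auto simp: sum.delta' fun_eq_iff)
  qed
  also have "\<dots> = rt' (rt' x b) a"
    unfolding ab id_tensor_Delta_Vt[OF x] id_tensor_Delta_Vt[OF Delta_coeff_in_Vt[OF x]]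
    by (auto simp: fun_eq_iff Delta_coeff_coassoc[OF W.module_axioms fsupp_Vt[OF x]])
  finally show ?thesis by simp
qed

lemma rt'_counit:
  assumes x: "x \<in> Vt"
  shows "(\<Sum>c\<in>fsupp (rt' x). scf (scf scale) (H_eps G c) (rt' x c)) = x"
proof (rule ext)
  fix n :: "'g \<times> 'f"
  obtain p q where n: "n = (p, q)" by (cases n)
  let ?P = "carrier G \<times> snd ` fsupp x"
  have finP: "finite ?P"
    using finite_carrier finite_snd_fsupp_Vt[OF x] by simp
  have "(\<Sum>c\<in>fsupp (rt' x). scf (scf scale) (H_eps G c) (rt' x c))
      = (\<Sum>c\<in>?P. scf (scf scale) (H_eps G c) (Delta_coeff (scf scale) x c))"
    unfolding id_tensor_Delta_Vt[OF x]
    by (rule sum_fsupp_eq_sum_superset[OF finP fsupp_Delta_coeff_Vt[OF x]]) (simp add: fun_eq_iff)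
  then have "(\<Sum>c\<in>fsupp (rt' x). scf (scf scale) (H_eps G c) (rt' x c)) n
      = (\<Sum>c\<in>?P. scf scale (H_eps G c) (Delta_coeff (scf scale) x c n))"
    by (simp add: sum_fun_apply)
  also have "\<dots> = (\<Sum>c\<in>?P. if c = (\<one>, q) then (if p \<in> carrier G then x (p, q) else 0) else 0)"
  proof (intro sum.cong refl)
    fix c assume c: "c \<in> ?P"
    obtain y f2 where ce: "c = (y, f2)" by (cases c)
    have "f2 \<in> Fc"
      using c ce finite_snd_fsupp_Vt[OF x] by auto
    then show "scf scale (H_eps G c) (Delta_coeff (scf scale) x c n) =
        (if c = (\<one>, q) then (if p \<in> carrier G then x (p, q) else 0) else 0)"
      by (auto simp: ce n H_eps_def Delta_coeff_apply lt_one tau_one_right)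
  qed
  also have "\<dots> = x n"
  proof -
    have "x (p, q) \<noteq> 0 \<Longrightarrow> p \<in> carrier G \<and> (\<one>, q) \<in> ?P"
      using fsupp_Vt[OF x] by (force simp: fsupp_def)
    then show ?thesis
      using finP n by (auto simp: sum.delta')
  qed
  finally show "(\<Sum>c\<in>fsupp (rt' x). scf (scf scale) (H_eps G c) (rt' x c)) n = x n" .
qed

theorem right_comodule_Vt:
  "right_comodule (scf (scf scale)) Vt (carrier G \<times> Fc) (H_Delta G lt \<tau>) (H_eps G) rt'"
proof -
  interpret WW: vector_space "scf (scf scale)"
    by (rule vector_space_scf) (rule W.vector_space_axioms)
  have "WW.subspace Vt"
    unfolding WW.subspace_def using zero_in_Vt add_in_Vt scale_in_Vt by blast
  moreover have "rt' (x + y) = (\<lambda>c. rt' x c + rt' y c)" if "x \<in> Vt" "y \<in> Vt" for x y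
    using that add_in_Vt[OF that]
    by (simp add: id_tensor_Delta_Vt fun_eq_iff Delta_coeff_add W.module_axioms)
  moreover have "rt' (scf (scf scale) a x) = (\<lambda>c. scf (scf scale) a (rt' x c))" if "x \<in> Vt" for a x
    using that scale_in_Vt[OF that]
    by (simp add: id_tensor_Delta_Vt fun_eq_iff Delta_coeff_scale W.module_axioms)
  moreover have "finite (fsupp (rt' x)) \<and> fsupp (rt' x) \<subseteq> carrier G \<times> Fc \<and> (\<forall>c. rt' x c \<in> Vt)"
    if "x \<in> Vt" for x
  proof -
    have "fsupp (rt' x) \<subseteq> carrier G \<times> snd ` fsupp x"
      using fsupp_Delta_coeff_Vt[OF that] by (simp add: id_tensor_Delta_Vt[OF that])
    moreover have "rt' x c \<in> Vt" for c
      using that by (cases c) (simp add: id_tensor_Delta_Vt Delta_coeff_in_Vt)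
    ultimately show ?thesis
      using finite_snd_fsupp_Vt[OF that] finite_carrier by (auto intro: finite_subset)
  qed
  ultimately show ?thesis
    unfolding right_comodule_def using rt'_coassoc rt'_counit by blast
qed

abbreviation "vz \<equiv> vfz scale G lt \<tau> f \<rho>"

lemma vfz_apply:
  assumes z: "z \<in> carrier G"
  shows "vz v z (h, f') =
    (if h \<in> carrier G \<and> h \<otimes> inv z \<in> Gf \<and> f' = lt (inv z) f
     then scf scale (\<tau> h (inv z) f) (vf (\<rho> v (h \<otimes> inv z)) f) else 0)"
proof -
  have "vz v z (h, f') = (\<Sum>g\<in>Gf. if g = h \<otimes> inv z then
     (if h \<in> carrier G \<and> f' = lt (inv z) f
      then scf scale (\<tau> h (inv z) f) (vf (\<rho> v (h \<otimes> inv z)) f) else 0) else 0)"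
    unfolding vfz_def sum_fun_apply[where x = "(h, f')"]
  proof (intro sum.cong refl)
    fix g assume "g \<in> Gf"
    then have "h = g \<otimes> z \<longleftrightarrow> h \<in> carrier G \<and> g = h \<otimes> inv z"
      using z stab_carrier by (metis inv_solve_right m_closed)
    then show "scf (scf scale) (\<tau> (g \<otimes> z) (inv z) f) (mt (vf (\<rho> v g) f) (g \<otimes> z, lt (inv z) f)) (h, f') =
      (if g = h \<otimes> inv z then (if h \<in> carrier G \<and> f' = lt (inv z) f
       then scf scale (\<tau> h (inv z) f) (vf (\<rho> v (h \<otimes> inv z)) f) else 0) else 0)"
      by (auto simp: mt_def fun_eq_iff)
  qed
  also have "\<dots> = (if h \<in> carrier G \<and> h \<otimes> inv z \<in> Gf \<and> f' = lt (inv z) f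
     then scf scale (\<tau> h (inv z) f) (vf (\<rho> v (h \<otimes> inv z)) f) else 0)"
    using finite_stab by (auto simp: sum.delta')
  finally show ?thesis .
qed

lemma lt_coset_base:
  assumes "y \<in> carrier G" "z \<in> carrier G" "y \<otimes> inv z \<in> Gf"
  shows "lt y (lt (inv z) f) = f"
  using assms f_in by (simp add: lt_mult[symmetric] lt_stab)

lemma Delta_coeff_vfz:
  assumes z: "z \<in> carrier G"
  shows "Delta_coeff (scf scale) (vz v z) (y, f2) (a, b) =
    (if y \<in> carrier G \<and> a \<in> carrier G \<and> f2 = lt (inv z) f \<and> b = lt y f2 \<and> a \<otimes> (y \<otimes> inv z) \<in> Gf
     then scf scale (\<tau> a (y \<otimes> inv z) f * \<tau> y (inv z) f) (vf (\<rho> v (a \<otimes> (y \<otimes> inv z))) f) else 0)"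
proof (cases "y \<in> carrier G \<and> a \<in> carrier G")
  case True
  then have "\<tau> a y (lt (inv z) f) * \<tau> (a \<otimes> y) (inv z) f = \<tau> a (y \<otimes> inv z) f * \<tau> y (inv z) f"
    using tau_cocycle z f_in by simp
  then show ?thesis
    using True z by (auto simp: Delta_coeff_apply vfz_apply m_assoc V.scale_scale fun_eq_iff)
qed (auto simp: Delta_coeff_apply)

lemma rho'_vfz:
  assumes z: "z \<in> carrier G"
  shows "\<rho>' (vz v z n) c = (if fst c \<in> Gf then Delta_coeff (scf scale) (vz v z) n c else 0)"
proof -
  let ?f0 = "lt (inv z) f"
  obtain y f2 a b where nc: "n = (y, f2)" "c = (a, b)" by (cases n, cases c)
  show ?thesis
  proof (cases "a \<in> Gf")
    case False
    then show ?thesis by (simp add: nc rho'_apply)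
  next
    case a: True
    show ?thesis
    proof (cases "y \<in> carrier G \<and> y \<otimes> inv z \<in> Gf \<and> f2 = ?f0")
      case True
      let ?u = "y \<otimes> inv z"
      have y: "y \<in> carrier G" and u: "?u \<in> Gf" and f2: "f2 = ?f0"
        using True by auto
      have au: "a \<otimes> ?u \<in> Gf"
        using a u stab_subgroup by (simp add: subgroup.m_closed)
      have "\<rho> (vz v z (y, f2) f) a = scale (\<tau> a ?u f * \<tau> y (inv z) f) (\<rho> v (a \<otimes> ?u))"
        using True z a stab_carrier[OF a]
        by (simp add: vfz_apply rho_scale rho_coassoc V.scale_scale mult.commute)
      then show ?thesis
        using y z a au f2 stab_carrier[OF a] lt_coset_base[OF y z u]
        by (simp add: nc rho'_apply Delta_coeff_vfz V.scf_vf)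
    next
      case False
      then have "vz v z (y, f2) = 0"
        using z by (auto simp: vfz_apply fun_eq_iff)
      moreover have "a \<otimes> (y \<otimes> inv z) \<in> Gf \<longleftrightarrow> y \<otimes> inv z \<in> Gf" if "y \<in> carrier G"
        using that z a by (simp add: stab_mult_right_iff)
      ultimately show ?thesis
        using False z a by (auto simp: nc rho'_zero Delta_coeff_vfz)
    qed
  qed
qed

lemma vfz_in_Vt:
  assumes z: "z \<in> carrier G"
  shows "vz v z \<in> Vt"
proof -
  let ?f0 = "lt (inv z) f"
  have sub: "fsupp (vz v z) \<subseteq> carrier G \<times> {?f0}"
    using z by (auto simp: fsupp_def vfz_apply split: if_splits)
  then have fin: "finite (fsupp (vz v z))"
    by (rule finite_subset) (simp add: finite_carrier)
  have sub': "fsupp (vz v z) \<subseteq> carrier G \<times> Fc"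
    using sub lt_closed[OF inv_closed[OF z] f_in] by auto
  have vf: "vz v z n \<in> Vf f" for n
    using z by (cases n) (simp add: vfz_apply zero_in_Vf V.scf_in_Vf vf_in_Vf)
  show ?thesis
    unfolding mem_Vt_iff by (intro conjI allI fin sub' vf rho'_vfz[OF z])
qed

lemma vfz_add: "z \<in> carrier G \<Longrightarrow> vz (v + w) z = vz v z + vz w z"
  by (intro ext, case_tac x) (simp add: vfz_apply rho_add vf_add W.scale_right_distrib)

lemma vfz_scale: "z \<in> carrier G \<Longrightarrow> vz (scale a v) z = scf (scf scale) a (vz v z)"
  by (intro ext, case_tac x)
    (simp add: vfz_apply rho_scale V.scf_vf[symmetric] W.scale_left_commute)

lemma Vt_component_relation:
  assumes w: "w \<in> Vt" and g: "g \<in> Gf" and y: "y \<in> carrier G" and "lt y f2 = f"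
  shows "vf (\<rho> (w (y, f2) f) g) f = scf scale (\<tau> g y f2) (w (g \<otimes> y, f2))"
proof -
  have "vf (\<rho> (w (y, f2) f) g) f = \<rho>' (w (y, f2)) (g, f)"
    using g by (simp add: rho'_apply)
  also have "\<dots> = Delta_coeff (scf scale) w (y, f2) (g, f)"
    using rho'_Vt[OF w] g by simp
  finally show ?thesis
    using assms stab_carrier by (simp add: Delta_coeff_apply)
qed

lemma vfz_base_point: "z \<in> carrier G \<Longrightarrow> vz v z (z, lt (inv z) f) = scf scale (\<tau> z (inv z) f) (vf v f)"
  using one_in_stab by (simp add: vfz_apply rho_counit)

lemma Vt_vanishes_off_fibre:
  assumes w: "w \<in> Vt" and h: "h \<in> carrier G" and z: "z \<in> carrier G" and "h \<otimes> inv z \<in> Gf"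
    and "f' \<noteq> lt (inv z) f"
  shows "w (h, f') = 0"
proof (rule ccontr)
  assume "w (h, f') \<noteq> 0"
  then have "f' \<in> Fc" "lt h f' = f"
    using Vt_nonzero_lt[OF w] by auto
  moreover have "lt h (lt (inv z) f) = f"
    using lt_coset_base[OF h z assms(4)] .
  ultimately show False
    using assms(5) lt_inv_eq[OF h] lt_closed[OF inv_closed[OF z] f_in] by metis
qed

text \<open>The component of \<open>w \<in> Vt\<close> at the base point \<open>(z, z\<inverse> \<triangleright> f)\<close> of the coset \<open>Gf z\<close>
  determines \<open>w\<close> on the whole coset; the normalisation comes from
  \<open>\<tau>(g, z; z\<inverse> \<triangleright> f) \<tau>(g z, z\<inverse>; f) = \<tau>(z, z\<inverse>; f)\<close>.\<close>

lemma vfz_base_component: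
  assumes w: "w \<in> Vt" and h: "h \<in> carrier G" and z: "z \<in> carrier G" and g: "h \<otimes> inv z \<in> Gf"
  shows "vz (scale (inverse (\<tau> z (inv z) f)) (w (z, lt (inv z) f) f)) z (h, f') = w (h, f')"
proof (cases "f' = lt (inv z) f")
  case False
  then show ?thesis
    using Vt_vanishes_off_fibre[OF w h z g] z by (simp add: vfz_apply)
next
  case True
  let ?g = "h \<otimes> inv z" and ?f0 = "lt (inv z) f"
  have h_eq: "?g \<otimes> z = h"
    using h z by (simp add: m_assoc)
  have "lt z ?f0 = f"
    using z f_in by (simp add: lt_mult[symmetric] lt_one)
  then have rel: "vf (\<rho> (w (z, ?f0) f) ?g) f = scf scale (\<tau> ?g z ?f0) (w (h, ?f0))"
    using Vt_component_relation[OF w g z] h_eq by simp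
  have "\<tau> ?g z ?f0 * \<tau> h (inv z) f = \<tau> z (inv z) f"
    using tau_cocycle[OF stab_carrier[OF g] z inv_closed[OF z] f_in] h_eq z f_in
    by (simp add: tau_one_right stab_carrier[OF g])
  then have coeff: "\<tau> h (inv z) f * inverse (\<tau> z (inv z) f) * \<tau> ?g z ?f0 = 1"
    using tau_nonzero z f_in by (simp add: field_simps)
  have "vz (scale (inverse (\<tau> z (inv z) f)) (w (z, ?f0) f)) z (h, f') =
      scf scale (\<tau> h (inv z) f * inverse (\<tau> z (inv z) f)) (vf (\<rho> (w (z, ?f0) f) ?g) f)"
    using True h g z by (simp add: vfz_apply rho_scale V.scf_vf[symmetric])
  also have "\<dots> = w (h, f')"
    unfolding rel using True coeff by (simp add: mult.assoc)
  finally show ?thesis .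
qed

text \<open>One coefficient of the coaction on \<open>v \<otimes> f \<otimes> z\<close>, for \<open>y z\<inverse> = w\<inverse> g\<inverse>\<close> with \<open>g \<in> Gf\<close>:
  both sides are multiples of \<open>v\<^bsub>a w\<inverse> g\<inverse>\<^esub>\<close>, and the scalars agree by two applications
  of the cocycle identity.\<close>

lemma Delta_coeff_vfz_eq:
  assumes z: "z \<in> carrier G" and y: "y \<in> carrier G" and g: "g \<in> Gf" and w: "w \<in> carrier G"
    and u: "y \<otimes> inv z = inv w \<otimes> inv g"
  shows "Delta_coeff (scf scale) (vz v z) (y, lt (inv z) f) (a, b) =
    scf scale (inverse (\<tau> (inv w) (inv g) f) * \<tau> y (inv z) f) (vz (\<rho> v (inv g)) w (a, b))"
proof -
  have gG: "g \<in> carrier G" and ig: "inv g \<in> Gf"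
    using g by (rule stab_carrier, rule inv_in_stab)
  have "lt y (lt (inv z) f) = lt (inv w \<otimes> inv g) f"
    using y z f_in by (simp add: lt_mult[symmetric] u)
  also have "\<dots> = lt (inv w) f"
    using w gG f_in lt_stab[OF ig] by (simp add: lt_mult)
  finally have lt_y: "lt y (lt (inv z) f) = lt (inv w) f" .
  show ?thesis
  proof (cases "a \<in> carrier G \<and> a \<otimes> inv w \<in> Gf")
    case False
    moreover have "a \<in> carrier G \<Longrightarrow> a \<otimes> (inv w \<otimes> inv g) \<in> Gf \<longleftrightarrow> a \<otimes> inv w \<in> Gf"
      using w gG ig by (simp add: m_assoc[symmetric] stab_mult_left_iff)
    ultimately have "Delta_coeff (scf scale) (vz v z) (y, lt (inv z) f) (a, b) = 0"
      unfolding Delta_coeff_vfz[OF z] u by (intro if_not_P) blast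
    moreover have "vz (\<rho> v (inv g)) w (a, b) = 0"
      unfolding vfz_apply[OF w] using False by (intro if_not_P) blast
    ultimately show ?thesis
      by simp
  next
    case aw: True
    then have a: "a \<in> carrier G" by simp
    have au: "a \<otimes> (inv w \<otimes> inv g) = a \<otimes> inv w \<otimes> inv g"
      using a w gG by (simp add: m_assoc)
    have awg: "a \<otimes> inv w \<otimes> inv g \<in> Gf"
      using aw ig stab_subgroup by (simp add: subgroup.m_closed)
    have coc: "\<tau> a (inv w) f * \<tau> (a \<otimes> inv w) (inv g) f = \<tau> a (inv w \<otimes> inv g) f * \<tau> (inv w) (inv g) f"
      using tau_cocycle[OF a inv_closed[OF w] inv_closed[OF gG] f_in] lt_stab[OF ig] by simp
    have nz: "\<tau> (inv w) (inv g) f \<noteq> 0"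
      using tau_nonzero w gG f_in by simp
    have coeff: "inverse (\<tau> (inv w) (inv g) f) * \<tau> y (inv z) f * (\<tau> a (inv w) f * \<tau> (a \<otimes> inv w) (inv g) f)
        = \<tau> a (inv w \<otimes> inv g) f * \<tau> y (inv z) f"
      unfolding coc using nz by (simp add: field_simps)
    have L: "Delta_coeff (scf scale) (vz v z) (y, lt (inv z) f) (a, b) = (if b = lt (inv w) f
        then scf scale (\<tau> a (inv w \<otimes> inv g) f * \<tau> y (inv z) f) (vf (\<rho> v (a \<otimes> inv w \<otimes> inv g)) f) else 0)"
      using y a z awg lt_y by (simp add: Delta_coeff_vfz u au)
    have R: "vz (\<rho> v (inv g)) w (a, b) = (if b = lt (inv w) f
        then scf scale (\<tau> a (inv w) f * \<tau> (a \<otimes> inv w) (inv g) f) (vf (\<rho> v (a \<otimes> inv w \<otimes> inv g)) f) else 0)"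
      using w a aw ig by (simp add: vfz_apply rho_coassoc V.scf_vf[symmetric] W.scale_scale)
    show ?thesis
      unfolding L R by (simp add: W.scale_scale coeff)
  qed
qed

end

section \<open>Decomposition along a transversal\<close>

locale stab_transversal = stab_comodule G lt Fc \<tau> scale f \<rho>
  for G :: "('g, 'a) monoid_scheme" (structure) and lt Fc
    and \<tau> :: "'g \<Rightarrow> 'g \<Rightarrow> 'f \<Rightarrow> 'k::field" and scale :: "'k \<Rightarrow> 'v::ab_group_add \<Rightarrow> 'v"
    and f \<rho> +
  fixes T :: "'g set"
  assumes transversal_subset: "T \<subseteq> carrier G"
    and transversal_unique: "\<forall>x\<in>carrier G. \<exists>!z. z \<in> T \<and> x \<in> Gf #> z"
begin

lemma transversal_carrier: "z \<in> T \<Longrightarrow> z \<in> carrier G"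
  using transversal_subset by auto

lemma finite_transversal: "finite T"
  using finite_carrier transversal_subset by (rule finite_subset[rotated])

lemma transversal_exists: "h \<in> carrier G \<Longrightarrow> \<exists>z\<in>T. h \<otimes> inv z \<in> Gf"
  using transversal_unique subgroup.rcos_module[OF stab_subgroup is_group transversal_carrier]
  by blast

lemma transversal_eq:
  assumes "z \<in> T" "z' \<in> T" "h \<in> carrier G" "h \<otimes> inv z \<in> Gf" "h \<otimes> inv z' \<in> Gf"
  shows "z = z'"
  using assms transversal_unique subgroup.rcos_module[OF stab_subgroup is_group transversal_carrier]
  by blast

lemma sum_vfz_apply:
  assumes h: "h \<in> carrier G" and z0: "z0 \<in> T" "h \<otimes> inv z0 \<in> Gf"
  shows "(\<Sum>z\<in>T. vz (vs z) z) (h, f') = vz (vs z0) z0 (h, f')"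
proof -
  have "vz (vs z) z (h, f') = 0" if "z \<in> T - {z0}" for z
  proof -
    have "h \<otimes> inv z \<notin> Gf"
      using that transversal_eq[OF _ z0(1) h _ z0(2)] by blast
    then show ?thesis
      using that by (simp add: vfz_apply transversal_carrier)
  qed
  then show ?thesis
    unfolding sum_fun_apply[where x = "(h, f')"] using finite_transversal z0(1)
    by (simp add: sum.remove)
qed

lemma sum_vfz_apply_outside:
  assumes "h \<notin> carrier G"
  shows "(\<Sum>z\<in>T. vz (vs z) z) (h, f') = 0"
  unfolding sum_fun_apply[where x = "(h, f')"]
  using assms by (intro sum.neutral) (simp add: vfz_apply transversal_carrier)

theorem vfz_independent:
  assumes "(\<Sum>z\<in>T. vz (vs z) z) = 0" and z0: "z0 \<in> T"
  shows "vs z0 = 0"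
proof -
  have z0G: "z0 \<in> carrier G"
    using z0 by (rule transversal_carrier)
  have "0 = (\<Sum>z\<in>T. vz (vs z) z) (z0, lt (inv z0) f)"
    using assms(1) by simp
  also have "\<dots> = scf scale (\<tau> z0 (inv z0) f) (vf (vs z0) f)"
    using z0 z0G one_in_stab by (simp add: sum_vfz_apply vfz_base_point)
  finally show ?thesis
    using tau_nonzero z0G f_in by (simp add: W.scale_eq_0_iff)
qed

theorem vfz_spanning:
  assumes w: "w \<in> Vt"
  shows "w = (\<Sum>z\<in>T. vz (scale (inverse (\<tau> z (inv z) f)) (w (z, lt (inv z) f) f)) z)"
proof (rule ext)
  fix n :: "'g \<times> 'f"
  obtain h f' where n: "n = (h, f')" by (cases n)
  show "w n = (\<Sum>z\<in>T. vz (scale (inverse (\<tau> z (inv z) f)) (w (z, lt (inv z) f) f)) z) n"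
  proof (cases "h \<in> carrier G")
    case False
    then show ?thesis
      using fsupp_subsetD[OF fsupp_Vt[OF w]] by (simp add: n sum_vfz_apply_outside)
  next
    case h: True
    then obtain z0 where "z0 \<in> T" and "h \<otimes> inv z0 \<in> Gf"
      using transversal_exists by blast
    then show ?thesis
      using vfz_base_component[OF w h transversal_carrier] by (simp add: n sum_vfz_apply[OF h])
  qed
qed

theorem rt'_vfz:
  assumes dec: "\<forall>x\<in>carrier G. gx x \<in> Gf \<and> zx x \<in> T \<and> x = gx x \<otimes> zx x" and zT: "z \<in> T"
  shows "rt' (vz v z) = (\<Sum>x\<in>carrier G.
      scf (scf (scf scale))
        (inverse (\<tau> (inv (zx x)) (inv (gx x)) f) * \<tau> (inv (zx x) \<otimes> inv (gx x) \<otimes> z) (inv z) f)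
        (mt (vz (\<rho> v (inv (gx x))) (zx x)) (inv x \<otimes> z, lt (inv z) f)))"
    (is "_ = ?rhs")
proof (rule ext, rule ext)
  fix h2 h1 :: "'g \<times> 'f"
  obtain y f2 a b where h: "h2 = (y, f2)" "h1 = (a, b)" by (cases h2, cases h1)
  have z: "z \<in> carrier G"
    using zT by (rule transversal_carrier)
  let ?f0 = "lt (inv z) f" and ?x0 = "z \<otimes> inv y"
  have lhs: "rt' (vz v z) h2 h1 = Delta_coeff (scf scale) (vz v z) (y, f2) (a, b)"
    by (simp add: h id_tensor_Delta_Vt[OF vfz_in_Vt[OF z]])
  have rhs: "?rhs h2 h1 = (if y \<in> carrier G \<and> f2 = ?f0 then
      scf scale (inverse (\<tau> (inv (zx ?x0)) (inv (gx ?x0)) f) * \<tau> (inv (zx ?x0) \<otimes> inv (gx ?x0) \<otimes> z) (inv z) f)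
       (vz (\<rho> v (inv (gx ?x0))) (zx ?x0) (a, b)) else 0)"
    unfolding h by (rule sum_mt_apply[OF W.module_axioms z])
  show "rt' (vz v z) h2 h1 = ?rhs h2 h1"
  proof (cases "y \<in> carrier G \<and> f2 = ?f0")
    case False
    then have "Delta_coeff (scf scale) (vz v z) (y, f2) (a, b) = 0"
      unfolding Delta_coeff_vfz[OF z] by (intro if_not_P) blast
    then show ?thesis
      unfolding lhs rhs if_not_P[OF False] .
  next
    case True
    then have y: "y \<in> carrier G" and f2: "f2 = ?f0" by auto
    define g w where "g = gx ?x0" and "w = zx ?x0"
    have "?x0 \<in> carrier G"
      using z y by simp
    then have g: "g \<in> Gf" and w: "w \<in> carrier G" and x0: "?x0 = g \<otimes> w"
      using dec by (auto simp: g_def w_def transversal_carrier)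
    have "y \<otimes> inv z = inv ?x0"
      using y z by (simp add: inv_mult_group)
    also have "\<dots> = inv w \<otimes> inv g"
      using x0 stab_carrier[OF g] w by (simp add: inv_mult_group)
    finally have u: "y \<otimes> inv z = inv w \<otimes> inv g" .
    then have "inv w \<otimes> inv g \<otimes> z = y"
      using y z by (simp add: u[symmetric] m_assoc)
    then show ?thesis
      unfolding lhs rhs g_def[symmetric] w_def[symmetric] f2
      using Delta_coeff_vfz_eq[OF z y g w u] y by simp
  qed
qed

end

theorem lemma4p2:
  fixes G :: "('g, 'a) monoid_scheme" and F :: "('f, 'b) monoid_scheme"
    and lt :: "'g \<Rightarrow> 'f \<Rightarrow> 'f" and rt :: "'g \<Rightarrow> 'f \<Rightarrow> 'g"
    and \<sigma> :: "'g \<Rightarrow> 'f \<Rightarrow> 'f \<Rightarrow> 'k::field_char_0" and \<tau> :: "'g \<Rightarrow> 'g \<Rightarrow> 'f \<Rightarrow> 'k"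
    and f :: 'f and T :: "'g set"
    and scale :: "'k \<Rightarrow> 'v::ab_group_add \<Rightarrow> 'v" and \<rho> :: "'v \<Rightarrow> 'g \<Rightarrow> 'v"
  assumes "alg_closed TYPE('k)"
    and "matched_pair G F lt rt"
    and "cocycles G F lt rt \<sigma> \<tau>"
    and "f \<in> carrier F"
    and "T \<subseteq> carrier G" and "\<one>\<^bsub>G\<^esub> \<in> T"
    and "\<forall>x\<in>carrier G. \<exists>!z. z \<in> T \<and> x \<in> stab G lt f #>\<^bsub>G\<^esub> z"
    and "vector_space scale"
    and "right_comodule scale UNIV (stab G lt f) (C_Delta G lt \<tau> f) (C_eps G) \<rho>"
  shows
    \<comment> \<open>(1) p_g |-> p_g # f is a coalgebra isomorphism onto the subcoalgebra span{p_g # f}\<close>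
    "(\<forall>g\<in>stab G lt f. fsupp (Hp_Delta G lt \<tau> f (g, f))
         \<subseteq> (stab G lt f \<times> {f}) \<times> (stab G lt f \<times> {f}))
     \<and> bij_betw (\<lambda>g. (g, f)) (stab G lt f) (stab G lt f \<times> {f})
     \<and> (\<forall>g\<in>stab G lt f.
          Hp_Delta G lt \<tau> f (g, f) = tensor_lin (\<lambda>a. pb (a, f)) (\<lambda>a. pb (a, f)) (C_Delta G lt \<tau> f g)
          \<and> H_eps G (g, f) = (C_eps G g :: 'k))
     \<comment> \<open>(2) V tensor kf is a right H'_f-comodule via rho'\<close>
     \<and> right_comodule (scf scale) (Vf f) (stab G lt f \<times> carrier F) (Hp_Delta G lt \<tau> f) (H_eps G)
         (rho' G lt f \<rho>)
     \<comment> \<open>(3) the cotensor product\<close>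
     \<and> (let Vt = cotensor (scf scale) (Vf f) (rho' G lt f \<rho>) (carrier G \<times> carrier F)
                    (H_left_coaction G lt \<tau> f);
            rt' = id_tensor_Delta (scf scale) (H_Delta G lt \<tau>)
        in right_comodule (scf (scf scale)) Vt (carrier G \<times> carrier F) (H_Delta G lt \<tau>) (H_eps G) rt'
         \<and> (\<forall>z\<in>T. \<forall>v. vfz scale G lt \<tau> f \<rho> v z \<in> Vt)
         \<and> (\<forall>z\<in>T. \<forall>v w. vfz scale G lt \<tau> f \<rho> (v + w) z
                         = vfz scale G lt \<tau> f \<rho> v z + vfz scale G lt \<tau> f \<rho> w z)
         \<and> (\<forall>z\<in>T. \<forall>a v. vfz scale G lt \<tau> f \<rho> (scale a v) z
                         = scf (scf scale) a (vfz scale G lt \<tau> f \<rho> v z))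
         \<and> (\<forall>w\<in>Vt. \<exists>vs. w = (\<Sum>z\<in>T. vfz scale G lt \<tau> f \<rho> (vs z) z))
         \<and> (\<forall>vs. (\<Sum>z\<in>T. vfz scale G lt \<tau> f \<rho> (vs z) z) = 0 \<longrightarrow> (\<forall>z\<in>T. vs z = 0))
         \<and> (\<forall>gx zx. (\<forall>x\<in>carrier G. gx x \<in> stab G lt f \<and> zx x \<in> T \<and> x = gx x \<otimes>\<^bsub>G\<^esub> zx x) \<longrightarrow>
              (\<forall>v. \<forall>z\<in>T. rt' (vfz scale G lt \<tau> f \<rho> v z) =
                 (\<Sum>x\<in>carrier G.
                    scf (scf (scf scale))
                      (inverse (\<tau> (inv\<^bsub>G\<^esub> zx x) (inv\<^bsub>G\<^esub> gx x) f)
                        * \<tau> (inv\<^bsub>G\<^esub> zx x \<otimes>\<^bsub>G\<^esub> inv\<^bsub>G\<^esub> gx x \<otimes>\<^bsub>G\<^esub> z) (inv\<^bsub>G\<^esub> z) f)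
                      (mt (vfz scale G lt \<tau> f \<rho> (\<rho> v (inv\<^bsub>G\<^esub> gx x)) (zx x))
                          (inv\<^bsub>G\<^esub> x \<otimes>\<^bsub>G\<^esub> z, lt (inv\<^bsub>G\<^esub> z) f))))))"
proof -
  have "cocycle_action G lt (carrier F) \<tau>"
    using assms(2,3) by (rule cocycle_action_of_matched_pair)
  then interpret stab_transversal G lt "carrier F" \<tau> scale f \<rho> T
    using assms(4,5,7-9)
    by (intro stab_transversal.intro stab_comodule.intro stab_transversal_axioms.intro
        stab_comodule_axioms.intro) auto
  have "\<forall>w\<in>Vt. \<exists>vs. w = (\<Sum>z\<in>T. vz (vs z) z)"
    by (intro ballI exI) (rule vfz_spanning)
  moreover have "\<forall>vs. (\<Sum>z\<in>T. vz (vs z) z) = 0 \<longrightarrow> (\<forall>z\<in>T. vs z = 0)"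
    using vfz_independent by blast
  ultimately show ?thesis
    unfolding Let_def using stab_coalgebra_embedding[THEN conjunct2]
    by (intro conjI ballI allI impI stab_coalgebra_embedding[THEN conjunct1, rule_format])
      (simp_all add: right_comodule_rho' right_comodule_Vt rt'_vfz transversal_carrier
        vfz_in_Vt vfz_add vfz_scale)
qed

end
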